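(* Let $0<a<b$, let $X$ be a random variable with values in $[a,b]$, $\mu=\mathbb{E}X$, $\sigma^2=\mathrm{Var}[X]$, and let $R_n, C_n$ be the effective resistance and effective conductance of the random network $T_n$ defined in the context. There exist constants $M_1,M_2$ depending only on $a$ and $b$ such that for all integers $n\ge 2$, $$\left|\mathbb{E}R_n-\mu n+\frac{\sigma^2}{\mu}\ln n\right|\le M_1\quad\text{and}\quad\left|\mathbb{E}C_n-\frac{1}{\mu n}-\frac{\sigma^2\ln n}{\mu^3n^2}\right|\le\frac{M_2}{n^2}.$$
   Context: For $n\ge1$, $T_n$ is the edge-rooted tree consisting of a root vertex $r$ joined by a single edge to a vertex $v$, where $v$ is the root of a complete binary tree with $n-1$ levels (so $T_n$ has $2^{n-1}$ leaves at distance $n$ from $r$). The depth $d(e)$ of an edge $e$ is the number of edges on the path that starts with $e$ and ends at $r$; the edge at $r$ has depth $1$. Each edge $e$ is given resistance $r_e=2^{d(e)-1}X_e$, with the $X_e$ i.i.d. copies of $X$. $R_n$ is the effective resistance between $r$ and the set of leaves of $T_n$, and $C_n=1/R_n$ is the effective conductance. *)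

theory Defs
  imports "HOL-Probability.Probability"
begin

text \<open>Edges of T_n are labelled by binary words w (bool lists) of length < n:
  the root edge is [], and the two edges below edge w are w@[False], w@[True].
  The edge labelled w has depth length w + 1.\<close>

definition par :: "real \<Rightarrow> real \<Rightarrow> real" where
  "par x y = x * y / (x + y)"

text \<open>eff r k w: effective resistance between the top endpoint of edge w and the
  leaves of the subtree consisting of edge w and the k-1 binary levels below it,
  where edge u carries resistance r u (series/parallel reduction in the tree).\<close>
fun eff :: "(bool list \<Rightarrow> real) \<Rightarrow> nat \<Rightarrow> bool list \<Rightarrow> real" where
  "eff r 0 w = 0"
| "eff r (Suc k) w = r w + par (eff r k (w @ [False])) (eff r k (w @ [True]))"

text \<open>Edge resistances r_e = 2^(d(e)-1) X_e with d(e) = length w + 1.\<close>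
definition edge_res :: "(bool list \<Rightarrow> 'a \<Rightarrow> real) \<Rightarrow> 'a \<Rightarrow> bool list \<Rightarrow> real" where
  "edge_res X \<omega> w = 2 ^ length w * X w \<omega>"

definition Rn :: "(bool list \<Rightarrow> 'a \<Rightarrow> real) \<Rightarrow> nat \<Rightarrow> 'a \<Rightarrow> real" where
  "Rn X n \<omega> = eff (edge_res X \<omega>) n []"

definition Cn :: "(bool list \<Rightarrow> 'a \<Rightarrow> real) \<Rightarrow> nat \<Rightarrow> 'a \<Rightarrow> real" where
  "Cn X n \<omega> = 1 / Rn X n \<omega>"

end

theory Submission
  imports Defs "HOL-Analysis.Harmonic_Numbers"
begin

text \<open>
  Rescale the resistance of the subtree hanging from an edge at depth \<open>d\<close> by \<open>2^(1-d)\<close>.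
  Then \<open>R\<^sub>k\<^sub>+\<^sub>1 = X + par (2R') (2R'')\<close> with \<open>X, R', R''\<close> independent and \<open>R', R''\<close> copies
  of \<open>R\<^sub>k\<close>. Since \<open>par (2y) (2z) = (y+z)/2 - (y-z)\<^sup>2/(2(y+z))\<close>, the mean grows by \<open>\<mu>\<close> minus a
  defect \<open>Var R\<^sub>k / (2 E R\<^sub>k) + O(k^-2)\<close>, and \<open>Var R\<^sub>k\<^sub>+\<^sub>1 = \<sigma>\<^sup>2 + Var R\<^sub>k / 2 + O(1/k)\<close>.
  The error terms are controlled through the conductance \<open>1/R\<^sub>k\<close>: its variance and fourth central
  moment contract by the factors \<open>3/4\<close> and \<open>1/3\<close> per level, up to errors \<open>O(k^-4)\<close> and
  \<open>O(k^-8)\<close>, which bounds the central moments of \<open>R\<^sub>k\<close> uniformly in \<open>k\<close>. Hence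
  \<open>Var R\<^sub>k = 2\<sigma>\<^sup>2 + O(1/k)\<close> and \<open>E R\<^sub>k\<^sub>+\<^sub>1 - E R\<^sub>k = \<mu> - \<sigma>\<^sup>2/(\<mu>k) + O(k^(-3/2))\<close>, which sums to
  \<open>\<mu>n - (\<sigma>\<^sup>2/\<mu>) ln n + O(1)\<close>. The conductance follows from \<open>E[1/R\<^sub>n] - 1/E R\<^sub>n = O(Var R\<^sub>n / n\<^sup>3)\<close>
  and a second-order expansion of \<open>1/E R\<^sub>n\<close>.
\<close>

section \<open>Series-parallel reduction of the tree\<close>

lemma par_scale:
  assumes "0 < c" shows "par (c*x) (c*y) = c * par x y"
proof -
  have "c*x*(c*y)/(c*x+c*y) = (c*(c*(x*y)))/(c*(x+y))" by (simp add: algebra_simps)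
  also have "\<dots> = c*(x*y)/(x+y)" using assms by simp
  finally show ?thesis unfolding par_def by simp
qed

lemma par_zero_zero[simp]: "par 0 0 = 0" by (simp add: par_def)

lemma measurable_par[measurable]:
  "f \<in> borel_measurable M \<Longrightarrow> g \<in> borel_measurable M \<Longrightarrow> (\<lambda>x. par (f x) (g x)) \<in> borel_measurable M"
  unfolding par_def by (intro borel_measurable_divide borel_measurable_times borel_measurable_add)

lemma par_double_bounds:
  assumes "0 \<le> lo" "lo \<le> y" "y \<le> hi" "lo \<le> z" "z \<le> hi"
  shows "lo \<le> par (2*y) (2*z) \<and> par (2*y) (2*z) \<le> hi"
proof (cases "y + z = 0")
  case True
  then have "y = 0" "z = 0" using assms by auto
  then show ?thesis using assms by simp
next
  case False
  then have p: "y + z > 0" using assms by auto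
  have e: "par (2*y) (2*z) = 2*y*z/(y+z)" unfolding par_def using p by (simp add: field_simps)
  have "lo*(y+z) \<le> 2*y*z"
  proof -
    have "0 \<le> y*(z-lo) + z*(y-lo)" using assms by (intro add_nonneg_nonneg mult_nonneg_nonneg) auto
    then show ?thesis by (simp add: algebra_simps)
  qed
  moreover have "2*y*z \<le> hi*(y+z)"
  proof -
    have "0 \<le> y*(hi-z) + z*(hi-y)" using assms by (intro add_nonneg_nonneg mult_nonneg_nonneg) auto
    then show ?thesis by (simp add: algebra_simps)
  qed
  ultimately show ?thesis unfolding e using p by (simp add: field_simps)
qed

text \<open>Dividing by \<open>2^length w\<close> makes all subtrees of the same height identically distributed.\<close>

definition subres :: "(bool list \<Rightarrow> 'a \<Rightarrow> real) \<Rightarrow> nat \<Rightarrow> bool list \<Rightarrow> 'a \<Rightarrow> real" where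
  "subres X k w \<omega> = eff (edge_res X \<omega>) k w / 2 ^ length w"

lemma subres_0[simp]: "subres X 0 w \<omega> = 0" by (simp add: subres_def)

lemma eff_eq_subres: "eff (edge_res X \<omega>) k w = 2 ^ length w * subres X k w \<omega>"
  by (simp add: subres_def)

lemma subres_Suc: "subres X (Suc k) w \<omega> = X w \<omega> + par (2 * subres X k (w@[False]) \<omega>) (2 * subres X k (w@[True]) \<omega>)"
proof -
  have "eff (edge_res X \<omega>) (Suc k) w = 2 ^ length w * X w \<omega> +
     par (2 ^ length w * (2 * subres X k (w@[False]) \<omega>)) (2 ^ length w * (2 * subres X k (w@[True]) \<omega>))"
    by (simp add: eff_eq_subres edge_res_def ac_simps)
  also have "\<dots> = 2 ^ length w * (X w \<omega> + par (2 * subres X k (w@[False]) \<omega>) (2 * subres X k (w@[True]) \<omega>))"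
    by (simp add: par_scale algebra_simps)
  finally show ?thesis by (simp add: subres_def)
qed

lemma Rn_eq_subres: "Rn X n \<omega> = subres X n [] \<omega>" by (simp add: Rn_def subres_def)

lemma subres_bounds:
  assumes "\<And>u. a \<le> X u \<omega> \<and> X u \<omega> \<le> b" "0 \<le> a"
  shows "a * real k \<le> subres X k w \<omega> \<and> subres X k w \<omega> \<le> b * real k"
proof (induction k arbitrary: w)
  case 0 then show ?case by simp
next
  case (Suc k)
  have "0 \<le> a * real k" using assms by simp
  from par_double_bounds[OF this, of "subres X k (w@[False]) \<omega>" "b * real k" "subres X k (w@[True]) \<omega>"] Suc.IH
  have "a * real k \<le> par (2 * subres X k (w@[False]) \<omega>) (2 * subres X k (w@[True]) \<omega>) \<and>
        par (2 * subres X k (w@[False]) \<omega>) (2 * subres X k (w@[True]) \<omega>) \<le> b * real k" by blast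
  then show ?case using assms(1)[of w] by (simp add: subres_Suc algebra_simps)
qed

definition subtree :: "bool list \<Rightarrow> bool list set" where "subtree w = {u. \<exists>t. u = w @ t}"

lemma subtree_self[simp]: "w \<in> subtree w"
  unfolding subtree_def by (metis (mono_tags) append_Nil2 mem_Collect_eq)
lemma subtree_child_subset: "subtree (w@[c]) \<subseteq> subtree w" unfolding subtree_def by auto

lemma eff_cong: "(\<And>u. u \<in> subtree w \<Longrightarrow> r u = r' u) \<Longrightarrow> eff r k w = eff r' k w"
proof (induction k arbitrary: w)
  case 0 then show ?case by simp
next
  case (Suc k)
  have "eff r k (w@[c]) = eff r' k (w@[c])" for c
    using Suc.IH[of "w@[c]"] Suc.prems subtree_child_subset by blast
  then show ?case using Suc.prems by simp
qed

lemma measurable_eff_PiM: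
  "subtree w \<subseteq> S \<Longrightarrow> (\<lambda>f. eff (\<lambda>u. 2 ^ length u * f u) k w) \<in> borel_measurable (PiM S (\<lambda>_. borel))"
proof (induction k arbitrary: w)
  case 0 then show ?case by simp
next
  case (Suc k)
  have w: "w \<in> S" using Suc.prems by auto
  have m1: "(\<lambda>f. eff (\<lambda>u. 2 ^ length u * f u) k (w@[c])) \<in> borel_measurable (PiM S (\<lambda>_. borel))" for c
    using Suc.IH Suc.prems subtree_child_subset by blast
  have m2: "(\<lambda>f. f w) \<in> borel_measurable (PiM S (\<lambda>_. borel))" 
    using w by (rule measurable_component_singleton)
  note [measurable] = m1[of False] m1[of True] m2
  show ?case by simp measurable
qed

definition subres_of :: "nat \<Rightarrow> bool list \<Rightarrow> (bool list \<Rightarrow> real) \<Rightarrow> real" where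
  "subres_of k w x = eff (\<lambda>u. 2 ^ length u * x u) k w / 2 ^ length w"

lemma measurable_subres_of:
  "subtree w \<subseteq> S \<Longrightarrow> subres_of k w \<in> borel_measurable (PiM S (\<lambda>_. borel))"
  using measurable_eff_PiM[of w S k] unfolding subres_of_def by measurable

lemma subres_restrict:
  assumes "subtree w \<subseteq> S"
  shows "subres X k w \<omega> = subres_of k w (restrict (\<lambda>i. X i \<omega>) S)"
  unfolding subres_def subres_of_def edge_res_def using assms
  by (intro arg_cong2[where f="(/)"] eff_cong refl) auto

lemma borel_measurable_subres:
  assumes "\<And>u. X u \<in> borel_measurable M"
  shows "subres X k w \<in> borel_measurable M"
proof (induction k arbitrary: w)
  case 0 then show ?case by simp
next
  case (Suc k)
  have e: "subres X (Suc k) w = (\<lambda>\<omega>. X w \<omega> + par (2 * subres X k (w@[False]) \<omega>) (2 * subres X k (w@[True]) \<omega>))"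
    by (rule ext) (simp add: subres_Suc)
  show ?case unfolding e using Suc.IH assms by measurable
qed

lemma subtree_disjoint: "w \<notin> subtree (w@[c])" "subtree (w@[False]) \<inter> subtree (w@[True]) = {}"
  unfolding subtree_def by auto

lemma (in prob_space) indep_var_restrict_compose:
  assumes "indep_vars (\<lambda>_. borel) X UNIV" "S \<inter> T = {}"
    and "F \<in> borel_measurable (PiM S (\<lambda>_. borel))" "G \<in> borel_measurable (PiM T (\<lambda>_. borel))"
  shows "indep_var borel (\<lambda>\<omega>. F (restrict (\<lambda>i. X i \<omega>) S)) borel (\<lambda>\<omega>. G (restrict (\<lambda>i. X i \<omega>) T))"
  using indep_var_compose[OF indep_var_restrict[OF assms(1,2)] assms(3,4)] by (simp add: comp_def)

lemma (in prob_space) indep_var_edge_children: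
  fixes X :: "bool list \<Rightarrow> 'a \<Rightarrow> real"
  assumes indep: "indep_vars (\<lambda>_. borel) X UNIV" and [measurable]: "\<phi> \<in> borel_measurable (borel \<Otimes>\<^sub>M borel)"
  shows "indep_var borel (X w) borel (\<lambda>\<omega>. \<phi> (subres X k (w@[False]) \<omega>, subres X k (w@[True]) \<omega>))"
proof -
  let ?B = "subtree (w@[False]) \<union> subtree (w@[True])"
  have [measurable]: "subres_of k (w@[c]) \<in> borel_measurable (PiM ?B (\<lambda>_. borel))" for c
    by (rule measurable_subres_of) (cases c; auto)
  have F: "(\<lambda>f. f w) \<in> borel_measurable (PiM {w} (\<lambda>_. borel))"
    by (rule measurable_component_singleton) simp
  have G: "(\<lambda>f. \<phi> (subres_of k (w@[False]) f, subres_of k (w@[True]) f)) \<in> borel_measurable (PiM ?B (\<lambda>_. borel))"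
    by measurable
  have "subres X k (w@[c]) \<omega> = subres_of k (w@[c]) (restrict (\<lambda>i. X i \<omega>) ?B)" for c \<omega>
    by (rule subres_restrict) (cases c; auto)
  then show ?thesis
    using indep_var_restrict_compose[OF indep _ F G] subtree_disjoint by auto
qed

lemma (in prob_space) indep_var_children:
  fixes X :: "bool list \<Rightarrow> 'a \<Rightarrow> real"
  assumes indep: "indep_vars (\<lambda>_. borel) X UNIV"
  shows "indep_var borel (subres X k (w@[False])) borel (subres X k (w@[True]))"
  using indep_var_restrict_compose[OF indep subtree_disjoint(2)
      measurable_subres_of[OF order_refl] measurable_subres_of[OF order_refl]]
  by (simp add: subres_restrict[OF order_refl, symmetric])

lemma (in prob_space) indep_vars_edge_children:
  fixes X :: "bool list \<Rightarrow> 'a \<Rightarrow> real"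
  assumes indep: "indep_vars (\<lambda>_. borel) X UNIV"
  shows "indep_vars (\<lambda>_. borel) (\<lambda>i. [X w, subres X k (w@[False]), subres X k (w@[True])] ! i) {0,1,2::nat}"
proof -
  let ?K = "\<lambda>i::nat. [{w}, subtree (w@[False]), subtree (w@[True])] ! i"
  let ?Y = "\<lambda>i::nat. [\<lambda>f. f w, subres_of k (w@[False]), subres_of k (w@[True])] ! i"
  have "disjoint_family_on ?K {0,1,2}"
    unfolding disjoint_family_on_def using subtree_disjoint by auto
  then have "indep_vars (\<lambda>j. PiM (?K j) (\<lambda>_. borel)) (\<lambda>j \<omega>. restrict (\<lambda>i. X i \<omega>) (?K j)) {0,1,2}"
    by (intro indep_vars_restrict[OF indep]) auto
  moreover have "?Y i \<in> borel_measurable (PiM (?K i) (\<lambda>_. borel))" if "i \<in> {0,1,2}" for i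
    using that measurable_subres_of[OF order_refl]
    by (auto simp: numeral_2_eq_2 intro: measurable_component_singleton)
  ultimately have "indep_vars (\<lambda>_. borel) (\<lambda>i \<omega>. ?Y i (restrict (\<lambda>i. X i \<omega>) (?K i))) {0,1,2}"
    by (rule indep_vars_compose2)
  then show ?thesis
  proof (rule indep_vars_cong[THEN iffD1, rotated 3])
    fix i :: nat assume "i \<in> {0,1,2}"
    then show "(\<lambda>\<omega>. ?Y i (restrict (\<lambda>i. X i \<omega>) (?K i))) = [X w, subres X k (w@[False]), subres X k (w@[True])] ! i"
      by (auto simp: fun_eq_iff numeral_2_eq_2 subres_restrict[OF order_refl])
  qed auto
qed

lemma (in prob_space) distr_subres_eq:
  fixes X :: "bool list \<Rightarrow> 'a \<Rightarrow> real"
  assumes indep: "indep_vars (\<lambda>_. borel) X UNIV"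
    and identically_distributed: "\<And>w. distr M borel (X w) = distr M borel (X [])"
  shows "distr M borel (subres X k w) = distr M borel (subres X k w')"
proof (induction k arbitrary: w w')
  case 0 then show ?case by simp
next
  case (Suc k)
  have X_measurable[measurable]: "X u \<in> borel_measurable M" for u
    using indep unfolding indep_vars_def by auto
  have subres_measurable[measurable]: "subres X k u \<in> borel_measurable M" for u
    by (rule borel_measurable_subres) simp
  let ?I = "{0,1,2::nat}"
  let ?Z = "\<lambda>w i. [X w, subres X k (w@[False]), subres X k (w@[True])] ! i"
  let ?F = "\<lambda>f::nat\<Rightarrow>real. f 0 + par (2 * f 1) (2 * f 2)"
  have mF: "?F \<in> borel_measurable (PiM ?I (\<lambda>_. borel))" by measurable
  have rvZ: "random_variable borel (?Z w i)" if "i \<in> ?I" for w i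
  proof -
    have "i = 0 \<or> i = 1 \<or> i = 2" using that by auto
    then show ?thesis by (auto simp: numeral_2_eq_2)
  qed
  have mT: "(\<lambda>\<omega>. \<lambda>i\<in>?I. ?Z w i \<omega>) \<in> measurable M (PiM ?I (\<lambda>_. borel))" for w
    using rvZ by (intro measurable_restrict) auto
  have key: "distr M borel (subres X (Suc k) w) = distr (PiM ?I (\<lambda>i. distr M borel (?Z w i))) borel ?F" for w
  proof -
    have "subres X (Suc k) w = ?F \<circ> (\<lambda>\<omega>. \<lambda>i\<in>?I. ?Z w i \<omega>)"
      by (auto simp: fun_eq_iff subres_Suc)
    then have "distr M borel (subres X (Suc k) w) = distr (distr M (PiM ?I (\<lambda>_. borel)) (\<lambda>\<omega>. \<lambda>i\<in>?I. ?Z w i \<omega>)) borel ?F"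
      using distr_distr[OF mF mT] by simp
    also have "distr M (PiM ?I (\<lambda>_. borel)) (\<lambda>\<omega>. \<lambda>i\<in>?I. ?Z w i \<omega>) = PiM ?I (\<lambda>i. distr M borel (?Z w i))"
      using indep_vars_iff_distr_eq_PiM'[where I="?I" and M'="\<lambda>_. borel" and X="?Z w"] rvZ indep_vars_edge_children[OF indep, of w k]
        by simp
    finally show ?thesis .
  qed
  have "PiM ?I (\<lambda>i. distr M borel (?Z w i)) = PiM ?I (\<lambda>i. distr M borel (?Z w' i))"
  proof (rule PiM_cong)
    fix i assume "i \<in> ?I"
    then have "i = 0 \<or> i = 1 \<or> i = 2" by auto
    then show "distr M borel (?Z w i) = distr M borel (?Z w' i)"
      using Suc.IH identically_distributed[of w] identically_distributed[of w'] by (auto simp: numeral_2_eq_2)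
  qed simp
  then show ?case using key[of w] key[of w'] by simp
qed

lemma par_double_inverse: "0 < y \<Longrightarrow> 0 < z \<Longrightarrow> par (2*y) (2*z) = 2 / (1/y + 1/z)"
  unfolding par_def by (simp add: field_simps)

lemma inverse_step_expansion:
  fixes x y z c b :: real
  assumes x: "0 \<le> x" "x \<le> b" and y: "0 < y" and z: "0 < z" and c: "0 < c"
  defines "u \<equiv> 1/y + 1/z - 2*c" and "p \<equiv> 2*x*c + 2"
  defines "T \<equiv> 1/(x + par (2*y) (2*z)) - 2*c/p"
  shows "\<bar>T\<bar> \<le> \<bar>u\<bar>/2" and "\<bar>T - 2*u/p^2\<bar> \<le> b*u^2/4"
proof -
  define S where "S = 1/y + 1/z"
  have S: "0 < S" using y z by (simp add: S_def add_pos_pos)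
  have p: "2 \<le> p" using x c by (simp add: p_def)
  have q: "2 \<le> x*S + 2" using x S by simp
  have pi: "par (2*y) (2*z) = 2/S" using par_double_inverse[OF y z] by (simp add: S_def)
  have inv: "1/(x + par (2*y) (2*z)) = S/(x*S+2)"
    unfolding pi using S q by (simp add: field_simps)
  have uS: "u = S - 2*c" by (simp add: u_def S_def)
  have T: "T = 2*u/((x*S+2)*p)"
  proof -
    have "0 < 2*x*c+2" using mult_nonneg_nonneg[of x c] x c by linarith
    moreover have "x*S+2 \<noteq> 0" "S*x+2 \<noteq> 0" using q by (auto simp: mult.commute)
    ultimately show ?thesis unfolding T_def inv uS p_def using S c x q by (simp add: field_simps)
  qed
  have "\<bar>T\<bar> = 2*\<bar>u\<bar>/((x*S+2)*p)" using T p q by (simp add: abs_divide abs_mult)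
  also have "\<dots> \<le> 2*\<bar>u\<bar>/(2*2)" using p q by (intro divide_left_mono mult_mono) auto
  finally show "\<bar>T\<bar> \<le> \<bar>u\<bar>/2" by simp
  have gen: "2*u/(Q*P) - 2*u/P^2 = 2*u*(P-Q)/(Q*P^2)" if "Q \<noteq> 0" "P \<noteq> 0" for P Q :: real
    using that by (simp add: field_simps power2_eq_square)
  have pq: "p - (x*S+2) = - x*u" by (simp add: p_def uS algebra_simps)
  have "T - 2*u/p^2 = 2*u*(p-(x*S+2))/((x*S+2)*p^2)" unfolding T using p q by (intro gen) auto
  also have "\<dots> = - (2*x*u^2)/((x*S+2)*p^2)" unfolding pq by (simp add: power2_eq_square)
  finally have "T - 2*u/p^2 = - (2*x*u^2)/((x*S+2)*p^2)" .
  then have "\<bar>T - 2*u/p^2\<bar> = 2*x*u^2/((x*S+2)*p^2)" using p q x by (simp add: abs_divide abs_mult)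
  also have "\<dots> \<le> 2*b*u^2/((x*S+2)*p^2)" using p q x by (intro divide_right_mono mult_right_mono) auto
  also have "\<dots> \<le> 2*b*u^2/(2*2^2)" using p q x by (intro divide_left_mono mult_mono power_mono) auto
  finally show "\<bar>T - 2*u/p^2\<bar> \<le> b*u^2/4" by simp
qed

lemma inverse_affine_diff_bounds:
  fixes x c a b :: real
  assumes "a \<le> x" "x \<le> b" "0 < a" "0 < c"
  shows "0 \<le> 2*c/(2*x*c+2) - 2*c/(2*b*c+2)" and "2*c/(2*x*c+2) - 2*c/(2*b*c+2) \<le> (b-a)*c^2"
proof -
  have p: "2 \<le> 2*x*c+2" "2 \<le> 2*b*c+2" using assms by auto
  have p3: "0 < 2*x*c+2" "0 < 2*b*c+2" using p by linarith+
  have pp: "0 < (2*b*c+2)*(2*x*c+2)" using p3 by (intro mult_pos_pos)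
  have gen: "2*c/P - 2*c/Q = 2*c*(Q-P)/(P*Q)" if "Q \<noteq> 0" "P \<noteq> 0" for P Q :: real
    using that by (simp add: field_simps)
  have e: "2*c/(2*x*c+2) - 2*c/(2*b*c+2) = 4*c^2*(b-x)/((2*x*c+2)*(2*b*c+2))"
    using gen[of "2*b*c+2" "2*x*c+2"] p3 by (simp add: algebra_simps power2_eq_square)
  show "0 \<le> 2*c/(2*x*c+2) - 2*c/(2*b*c+2)" unfolding e using p assms by simp
  have "4*c^2*(b-x)/((2*x*c+2)*(2*b*c+2)) \<le> 4*c^2*(b-a)/((2*x*c+2)*(2*b*c+2))"
    using p assms by (intro divide_right_mono mult_left_mono) auto
  also have "\<dots> \<le> 4*c^2*(b-a)/(2*2)" using p pp assms by (intro divide_left_mono mult_mono) auto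
  finally show "2*c/(2*x*c+2) - 2*c/(2*b*c+2) \<le> (b-a)*c^2" unfolding e by (simp add: mult.commute)
qed

lemma power2_add_le_9: "(x+y)^2 \<le> (9/8)*x^2 + 9*(y::real)^2"
proof -
  have "0 \<le> (x - 8*y)^2" by simp
  then show ?thesis by (simp add: power2_eq_square algebra_simps)
qed

lemma power4_add_le_729: "(x+y)^4 \<le> (729/512)*x^4 + 729*(y::real)^4"
proof -
  have "(x+y)^4 = ((x+y)^2)^2" by simp
  also have "\<dots> \<le> ((9/8)*x^2 + 9*y^2)^2" using power2_add_le_9[of x y] by (intro power_mono) auto
  also have "\<dots> \<le> (9/8)*((9/8)*x^2)^2 + 9*(9*y^2)^2" by (rule power2_add_le_9)
  also have "\<dots> = (729/512)*x^4 + 729*y^4" by (simp add: field_simps eval_nat_numeral)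
  finally show ?thesis .
qed

lemma power2_add_le_3: "(x+y)^2 \<le> (3/2)*x^2 + 3*(y::real)^2"
proof -
  have "0 \<le> (x - 2*y)^2" by simp
  then show ?thesis by (simp add: power2_eq_square algebra_simps)
qed

lemma power3_add_le: "0 \<le> x \<Longrightarrow> 0 \<le> y \<Longrightarrow> (x+y)^3 \<le> 4*(x^3+(y::real)^3)"
proof -
  assume x: "0 \<le> x" and y: "0 \<le> y"
  have "0 \<le> (x+y)*(x-y)^2" using x y by simp
  then show ?thesis by (simp add: power2_eq_square power3_eq_cube algebra_simps)
qed

lemma abs_power3_le: "\<bar>p::real\<bar>^3 \<le> (p^4 + p^2)/2"
proof -
  have "0 \<le> p^2 * (\<bar>p\<bar> - 1)^2" by simp
  then have "0 \<le> \<bar>p\<bar>^2*\<bar>p\<bar>^2 - 2*\<bar>p\<bar>^2*\<bar>p\<bar> + \<bar>p\<bar>^2" by (simp add: power2_diff algebra_simps)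
  moreover have "\<bar>p\<bar>^2*\<bar>p\<bar>^2 = p^4" by (simp flip: power_add)
  moreover have "\<bar>p\<bar>^2*\<bar>p\<bar> = \<bar>p\<bar>^3" by (simp add: power2_eq_square power3_eq_cube)
  moreover have "\<bar>p\<bar>^2 = p^2" by simp
  ultimately show ?thesis by simp
qed

lemma power2_diff_mult_abs_add_le: "(p-q)^2 * \<bar>p+q\<bar> \<le> 2*(p^4 + p^2 + q^4 + (q::real)^2)"
proof -
  have "\<bar>p-q\<bar>^2 \<le> (\<bar>p\<bar>+\<bar>q\<bar>)^2"
    by (rule power_mono) (auto simp: abs_triangle_ineq4)
  then have "(p-q)^2 \<le> (\<bar>p\<bar>+\<bar>q\<bar>)^2" by simp
  moreover have "\<bar>p+q\<bar> \<le> \<bar>p\<bar>+\<bar>q\<bar>" by (rule abs_triangle_ineq)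
  ultimately have "(p-q)^2 * \<bar>p+q\<bar> \<le> (\<bar>p\<bar>+\<bar>q\<bar>)^2 * (\<bar>p\<bar>+\<bar>q\<bar>)"
    by (intro mult_mono) auto
  also have "\<dots> = (\<bar>p\<bar>+\<bar>q\<bar>)^3" by (simp add: power2_eq_square power3_eq_cube)
  also have "\<dots> \<le> 4*(\<bar>p\<bar>^3+\<bar>q\<bar>^3)" by (rule power3_add_le) auto
  also have "\<dots> \<le> 2*(p^4 + p^2 + q^4 + q^2)"
  proof -
    have "2*\<bar>p\<bar>^3 \<le> p^4+p^2" "2*\<bar>q\<bar>^3 \<le> q^4+q^2" using abs_power3_le[of p] abs_power3_le[of q] by simp_all
    then show ?thesis by simp
  qed
  finally show ?thesis .
qed

lemma power4_diff_le: "(p-q)^4 \<le> 8*(p^4 + (q::real)^4)"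
proof -
  have "(p-q)^2 \<le> 2*(p^2+q^2)"
  proof -
    have "0 \<le> (p+q)^2" by simp
    then show ?thesis by (simp add: power2_eq_square algebra_simps)
  qed
  then have "((p-q)^2)^2 \<le> (2*(p^2+q^2))^2" by (intro power_mono) auto
  also have "\<dots> \<le> 8*(p^4+q^4)"
  proof -
    have "0 \<le> (p^2-q^2)^2" by simp
    then show ?thesis by (simp add: power2_eq_square algebra_simps eval_nat_numeral)
  qed
  finally show ?thesis by (simp flip: power_mult)
qed

lemma par_double_eq: "0 < y + z \<Longrightarrow> par (2*y) (2*z) = (y+z)/2 - (y-z)^2/(2*(y+z))"
  unfolding par_def by (simp add: field_simps power2_eq_square)

lemma quotient_defect_bounds:
  fixes y z K :: real
  assumes "0 < K" "K \<le> y" "K \<le> z"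
  shows "0 \<le> (y-z)^2/(2*(y+z)) \<and> (y-z)^2/(2*(y+z)) \<le> (y-z)^2/(4*K)"
  using assms by (auto intro!: divide_left_mono)

lemma quotient_defect_approx:
  fixes y z K m :: real
  assumes "0 < K" "K \<le> y" "K \<le> z" "K \<le> m"
  shows "\<bar>(y-z)^2/(2*(y+z)) - (y-z)^2/(4*m)\<bar> \<le> (y-z)^2 * \<bar>y+z-2*m\<bar> / (8*K^2)"
proof -
  have gen: "X/(2*S) - X/(4*m) = X*(2*m-S)/(4*m*S)" if "S \<noteq> 0" "m \<noteq> 0" for X S :: real
    using that by (simp add: field_simps)
  have e: "(y-z)^2/(2*(y+z)) - (y-z)^2/(4*m) = (y-z)^2*(2*m-(y+z))/(4*m*(y+z))"
    using assms by (intro gen) auto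
  have d: "8*K^2 \<le> 4*m*(y+z)"
  proof -
    have "K*(2*K) \<le> m*(y+z)" using assms by (intro mult_mono) auto
    then show ?thesis by (simp add: power2_eq_square)
  qed
  have "\<bar>(y-z)^2*(2*m-(y+z))/(4*m*(y+z))\<bar> = (y-z)^2*\<bar>y+z-2*m\<bar>/(4*m*(y+z))"
    using assms by (simp add: abs_mult abs_divide abs_minus_commute)
  also have "\<dots> \<le> (y-z)^2*\<bar>y+z-2*m\<bar>/(8*K^2)"
    using assms d by (intro divide_left_mono) auto
  finally show ?thesis unfolding e .
qed

lemma abs_diff_inverse_le:
  fixes y c B :: real
  assumes "0 < y" "y \<le> B" "1/B \<le> c" "0 < B"
  shows "\<bar>y - 1/c\<bar> \<le> B^2 * \<bar>1/y - c\<bar>"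
proof -
  have c: "0 < c" using assms by (smt (verit) divide_pos_pos)
  have ic: "1/c \<le> B" using assms c by (simp add: divide_simps mult.commute)
  have "y - 1/c = y * (c - 1/y) / c" using assms c by (simp add: field_simps)
  then have "\<bar>y - 1/c\<bar> = y * \<bar>1/y - c\<bar> * (1/c)" using assms c by (simp add: abs_mult abs_minus_commute)
  also have "\<dots> \<le> B * \<bar>1/y - c\<bar> * B" using assms c ic by (intro mult_mono) auto
  finally show ?thesis by (simp add: power2_eq_square mult_ac)
qed

lemma sqrt_le_self: "1 \<le> x \<Longrightarrow> sqrt x \<le> (x::real)"
proof -
  assume x: "1 \<le> x"
  have "1 \<le> sqrt x" using x by simp
  then have "sqrt x * 1 \<le> sqrt x * sqrt x" by (intro mult_left_mono) auto
  then show ?thesis using x by simp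
qed

lemma power2_add_expand: "((p::real)+q)^2 = p^2 + 2*(p*q) + q^2" by (simp add: power2_eq_square algebra_simps)
lemma power4_add_expand: "((p::real)+q)^4 = p^4 + 4*(p^3*q) + 6*(p^2*q^2) + 4*(p*q^3) + q^4"
  by algebra
lemma inverse_sum_split: "1/y + 1/z - 2*(c::real) = (1/y - c) + (1/z - c)" by simp

lemma ln_le_self: "0 < x \<Longrightarrow> ln x \<le> (x::real)"
  using ln_le_minus_one[of x] by simp

lemma power2_ln_le: "1 \<le> x \<Longrightarrow> (ln x)^2 \<le> 4 * (x::real)"
proof -
  assume x: "1 \<le> x"
  have "ln x = 2 * ln (sqrt x)" using x by (simp add: ln_sqrt)
  also have "\<dots> \<le> 2 * sqrt x" using ln_le_self[of "sqrt x"] x by simp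
  finally have "(ln x)^2 \<le> (2 * sqrt x)^2" using x by (intro power_mono) auto
  then show ?thesis using x by (simp add: power_mult_distrib)
qed

context prob_space
begin

definition bounded_rv :: "('a \<Rightarrow> real) \<Rightarrow> bool" where
  "bounded_rv h \<longleftrightarrow> h \<in> borel_measurable M \<and> (\<exists>B. \<forall>\<omega>\<in>space M. \<bar>h \<omega>\<bar> \<le> B)"

lemma bounded_rv_integrable[simp]:
  assumes "bounded_rv h" shows "integrable M h"
proof -
  obtain B where "h \<in> borel_measurable M" "\<forall>\<omega>\<in>space M. \<bar>h \<omega>\<bar> \<le> B"
    using assms unfolding bounded_rv_def by blast
  then show ?thesis by (intro integrable_const_bound[where B=B]) auto
qed

lemma bounded_rvI: "h \<in> borel_measurable M \<Longrightarrow> (\<And>\<omega>. \<omega> \<in> space M \<Longrightarrow> \<bar>h \<omega>\<bar> \<le> B) \<Longrightarrow> bounded_rv h"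
  unfolding bounded_rv_def by blast

lemma bounded_rv_const[simp]: "bounded_rv (\<lambda>\<omega>. c)" by (rule bounded_rvI[where B="\<bar>c\<bar>"]) auto

lemma bounded_rv_add[simp]: "bounded_rv f \<Longrightarrow> bounded_rv g \<Longrightarrow> bounded_rv (\<lambda>\<omega>. f \<omega> + g \<omega>)"
  unfolding bounded_rv_def by (auto intro!: exI[where x="_ + _"] abs_triangle_ineq[THEN order_trans] add_mono)
lemma bounded_rv_diff[simp]: "bounded_rv f \<Longrightarrow> bounded_rv g \<Longrightarrow> bounded_rv (\<lambda>\<omega>. f \<omega> - g \<omega>)"
  unfolding bounded_rv_def by (auto intro!: exI[where x="_ + _"] abs_triangle_ineq4[THEN order_trans] add_mono)
lemma bounded_rv_mult[simp]: "bounded_rv f \<Longrightarrow> bounded_rv g \<Longrightarrow> bounded_rv (\<lambda>\<omega>. f \<omega> * g \<omega>)"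
proof -
  assume "bounded_rv f" "bounded_rv g"
  then obtain B C where B: "\<forall>\<omega>\<in>space M. \<bar>f \<omega>\<bar> \<le> B" and C: "\<forall>\<omega>\<in>space M. \<bar>g \<omega>\<bar> \<le> C"
    and [measurable]: "f \<in> borel_measurable M" "g \<in> borel_measurable M" unfolding bounded_rv_def by blast
  show ?thesis
  proof (rule bounded_rvI[where B="B*C"])
    fix \<omega> assume "\<omega> \<in> space M"
    then show "\<bar>f \<omega> * g \<omega>\<bar> \<le> B * C" using B C by (auto simp: abs_mult intro!: mult_mono)
  qed measurable
qed
lemma bounded_rv_pow[simp]: "bounded_rv f \<Longrightarrow> bounded_rv (\<lambda>\<omega>. f \<omega> ^ n)"
  by (induction n) auto
lemma bounded_rv_abs[simp]: "bounded_rv f \<Longrightarrow> bounded_rv (\<lambda>\<omega>. \<bar>f \<omega>\<bar>)"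
  unfolding bounded_rv_def by auto
lemma bounded_rv_divide:
  assumes "bounded_rv f" "bounded_rv g" "0 < d" "\<And>\<omega>. \<omega> \<in> space M \<Longrightarrow> d \<le> g \<omega>"
  shows "bounded_rv (\<lambda>\<omega>. f \<omega> / g \<omega>)"
proof -
  obtain B where B: "\<forall>\<omega>\<in>space M. \<bar>f \<omega>\<bar> \<le> B" and [measurable]: "f \<in> borel_measurable M" "g \<in> borel_measurable M"
    using assms unfolding bounded_rv_def by blast
  show ?thesis
  proof (rule bounded_rvI[where B="B/d"])
    fix \<omega> assume w: "\<omega> \<in> space M"
    have "\<bar>f \<omega> / g \<omega>\<bar> = \<bar>f \<omega>\<bar> / g \<omega>" using assms(3) assms(4)[OF w] by simp
    also have "\<dots> \<le> B / g \<omega>" using B w assms(3) assms(4)[OF w] by (intro divide_right_mono) auto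
    also have "\<dots> \<le> B / d" using B w assms(3) assms(4)[OF w] by (intro divide_left_mono) (auto intro: order_trans[OF abs_ge_zero])
    finally show "\<bar>f \<omega> / g \<omega>\<bar> \<le> B / d" .
  qed measurable
qed

lemma bounded_rv_divide_const[simp]: "bounded_rv f \<Longrightarrow> bounded_rv (\<lambda>\<omega>. f \<omega> / c)"
  using bounded_rv_mult[of f "\<lambda>_. 1/c"] by simp

lemma integral_power2_diff_const: "bounded_rv Z \<Longrightarrow> (\<integral>\<omega>. (Z \<omega> - t)^2 \<partial>M) = (\<integral>\<omega>. (Z \<omega>)^2 \<partial>M) - 2*t*(\<integral>\<omega>. Z \<omega> \<partial>M) + t^2"
proof -
  assume Z: "bounded_rv Z"
  have "(\<integral>\<omega>. (Z \<omega> - t)^2 \<partial>M) = (\<integral>\<omega>. ((Z \<omega>)^2 - (2*t) * Z \<omega>) + t^2 \<partial>M)"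
    by (simp add: power2_diff algebra_simps)
  also have "\<dots> = (\<integral>\<omega>. (Z \<omega>)^2 \<partial>M) - 2*t*(\<integral>\<omega>. Z \<omega> \<partial>M) + t^2"
    using Z by (simp add: prob_space)
  finally show ?thesis .
qed

lemma variance_le: "bounded_rv Z \<Longrightarrow> (\<integral>\<omega>. (Z \<omega> - (\<integral>\<omega>. Z \<omega> \<partial>M))^2 \<partial>M) \<le> (\<integral>\<omega>. (Z \<omega> - t)^2 \<partial>M)"
proof -
  assume Z: "bounded_rv Z"
  define m where "m = (\<integral>\<omega>. Z \<omega> \<partial>M)"
  define A where "A = (\<integral>\<omega>. (Z \<omega>)^2 \<partial>M)"
  have 1: "(\<integral>\<omega>. (Z \<omega> - t)^2 \<partial>M) = A - 2*t*m + t^2" using integral_power2_diff_const[OF Z] by (simp add: A_def m_def)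
  have 2: "(\<integral>\<omega>. (Z \<omega> - m)^2 \<partial>M) = A - m^2" using integral_power2_diff_const[OF Z] by (simp add: A_def m_def power2_eq_square)
  have 3: "0 \<le> (m - t)^2" by simp
  have 4: "(m - t)^2 = m^2 - 2*t*m + t^2" by (simp add: power2_diff)
  show ?thesis unfolding m_def[symmetric] 1 2 using 3 4 by linarith
qed

lemma power2_integral_le: "bounded_rv (Z::'a\<Rightarrow>real) \<Longrightarrow> (\<integral>\<omega>. Z \<omega> \<partial>M)^2 \<le> (\<integral>\<omega>. (Z \<omega>)^2 \<partial>M)"
proof -
  assume Z: "bounded_rv Z"
  have "0 \<le> (\<integral>\<omega>. (Z \<omega> - (\<integral>\<omega>. Z \<omega> \<partial>M))^2 \<partial>M)" by (intro integral_nonneg_AE) auto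
  moreover have "(\<integral>\<omega>. (Z \<omega> - (\<integral>\<omega>. Z \<omega> \<partial>M))^2 \<partial>M) = (\<integral>\<omega>. (Z \<omega>)^2 \<partial>M) - (\<integral>\<omega>. Z \<omega> \<partial>M)^2"
    using integral_power2_diff_const[OF Z, of "\<integral>\<omega>. Z \<omega> \<partial>M"] by (simp add: power2_eq_square)
  ultimately show ?thesis by linarith
qed

lemma integral_mono_bounded: "bounded_rv f \<Longrightarrow> bounded_rv g \<Longrightarrow> (\<And>\<omega>. \<omega> \<in> space M \<Longrightarrow> f \<omega> \<le> g \<omega>) \<Longrightarrow> (\<integral>\<omega>. f \<omega> \<partial>M) \<le> (\<integral>\<omega>. g \<omega> \<partial>M)"
  by (rule integral_mono) auto

lemma integral_between: "bounded_rv f \<Longrightarrow> (\<And>\<omega>. \<omega> \<in> space M \<Longrightarrow> lo \<le> f \<omega> \<and> f \<omega> \<le> hi) \<Longrightarrow> lo \<le> (\<integral>\<omega>. f \<omega> \<partial>M) \<and> (\<integral>\<omega>. f \<omega> \<partial>M) \<le> hi"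
  using integral_mono_bounded[of "\<lambda>_. lo" f] integral_mono_bounded[of f "\<lambda>_. hi"] by (auto simp: prob_space)

lemma abs_integral_le: "bounded_rv f \<Longrightarrow> \<bar>\<integral>\<omega>. f \<omega> \<partial>M\<bar> \<le> (\<integral>\<omega>. \<bar>f \<omega>\<bar> \<partial>M)"
  using integral_abs_bound[of M f] by simp

end

section \<open>One step of the recursion\<close>

text \<open>\<open>Y0\<close> is the top edge of a subtree of height \<open>k + 1\<close>, \<open>Y1\<close> and \<open>Y2\<close> are the rescaled resistances
  of its two subtrees of height \<open>k\<close>, and \<open>Ynext\<close> is the rescaled resistance of the whole.\<close>

locale recursion_step = prob_space +
  fixes Y0 Y1 Y2 :: "'a \<Rightarrow> real" and a b :: real and k :: nat
  assumes m0[measurable]: "Y0 \<in> borel_measurable M"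
    and m1[measurable]: "Y1 \<in> borel_measurable M"
    and m2[measurable]: "Y2 \<in> borel_measurable M"
    and indep_Y0_children: "\<And>\<phi>. \<phi> \<in> borel_measurable (borel \<Otimes>\<^sub>M borel) \<Longrightarrow> indep_var borel Y0 borel (\<lambda>\<omega>. \<phi> (Y1 \<omega>, Y2 \<omega>))"
    and indep_Y1_Y2: "indep_var borel Y1 borel Y2"
    and same_law_Y1_Y2: "distr M borel Y1 = distr M borel Y2"
    and ab: "0 < a" "a \<le> b" and k1: "1 \<le> k"
    and Y0_bounds: "\<And>\<omega>. \<omega> \<in> space M \<Longrightarrow> a \<le> Y0 \<omega> \<and> Y0 \<omega> \<le> b"
    and Y1_bounds: "\<And>\<omega>. \<omega> \<in> space M \<Longrightarrow> a * k \<le> Y1 \<omega> \<and> Y1 \<omega> \<le> b * k"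
    and Y2_bounds: "\<And>\<omega>. \<omega> \<in> space M \<Longrightarrow> a * k \<le> Y2 \<omega> \<and> Y2 \<omega> \<le> b * k"
begin

lemma akpos: "0 < a * k" using ab k1 by simp

lemma integral_Y2_eq_Y1: "(f :: real \<Rightarrow> real) \<in> borel_measurable borel \<Longrightarrow> (\<integral>\<omega>. f (Y2 \<omega>) \<partial>M) = (\<integral>\<omega>. f (Y1 \<omega>) \<partial>M)"
  using integral_distr[OF m1, of f] integral_distr[OF m2, of f] same_law_Y1_Y2 by simp

lemma integral_mult_Y1_Y2:
  fixes f g :: "real \<Rightarrow> real"
  assumes [measurable]: "f \<in> borel_measurable borel" "g \<in> borel_measurable borel"
    and "integrable M (\<lambda>\<omega>. f (Y1 \<omega>))" "integrable M (\<lambda>\<omega>. g (Y2 \<omega>))"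
  shows "(\<integral>\<omega>. f (Y1 \<omega>) * g (Y2 \<omega>) \<partial>M) = (\<integral>\<omega>. f (Y1 \<omega>) \<partial>M) * (\<integral>\<omega>. g (Y2 \<omega>) \<partial>M)"
proof -
  have "indep_var borel (f \<circ> Y1) borel (g \<circ> Y2)" by (rule indep_var_compose[OF indep_Y1_Y2]) auto
  then show ?thesis using indep_var_lebesgue_integral[of "f \<circ> Y1" "g \<circ> Y2"] assms(3,4) by (simp add: comp_def)
qed

lemma integral_mult_Y0_children:
  fixes f :: "real \<Rightarrow> real" and \<phi> :: "real \<times> real \<Rightarrow> real"
  assumes [measurable]: "f \<in> borel_measurable borel" "\<phi> \<in> borel_measurable (borel \<Otimes>\<^sub>M borel)"
    and "integrable M (\<lambda>\<omega>. f (Y0 \<omega>))" "integrable M (\<lambda>\<omega>. \<phi> (Y1 \<omega>, Y2 \<omega>))"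
  shows "(\<integral>\<omega>. f (Y0 \<omega>) * \<phi> (Y1 \<omega>, Y2 \<omega>) \<partial>M) = (\<integral>\<omega>. f (Y0 \<omega>) \<partial>M) * (\<integral>\<omega>. \<phi> (Y1 \<omega>, Y2 \<omega>) \<partial>M)"
proof -
  have "indep_var borel (f \<circ> Y0) borel (id \<circ> (\<lambda>\<omega>. \<phi> (Y1 \<omega>, Y2 \<omega>)))" by (rule indep_var_compose[OF indep_Y0_children]) auto
  then show ?thesis using indep_var_lebesgue_integral[of "f \<circ> Y0" "(\<lambda>\<omega>. \<phi> (Y1 \<omega>, Y2 \<omega>))"] assms(3,4) by (simp add: comp_def)
qed

lemma bounded_rv_Y0[simp]: "bounded_rv Y0" using Y0_bounds ab by (intro bounded_rvI[where B=b]) force+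
lemma bounded_rv_Y1[simp]: "bounded_rv Y1" using Y1_bounds akpos by (intro bounded_rvI[where B="b*k"]) force+
lemma bounded_rv_Y2[simp]: "bounded_rv Y2" using Y2_bounds akpos by (intro bounded_rvI[where B="b*k"]) force+

lemma bounded_rv_divide_Y1[simp]: "bounded_rv f \<Longrightarrow> bounded_rv (\<lambda>\<omega>. f \<omega> / Y1 \<omega>)"
  using akpos Y1_bounds by (intro bounded_rv_divide[where d="a*k"]) auto
lemma bounded_rv_divide_Y2[simp]: "bounded_rv f \<Longrightarrow> bounded_rv (\<lambda>\<omega>. f \<omega> / Y2 \<omega>)"
  using akpos Y2_bounds by (intro bounded_rv_divide[where d="a*k"]) auto
lemma bounded_rv_divide_mult_Y1[simp]: "bounded_rv f \<Longrightarrow> bounded_rv (\<lambda>\<omega>. f \<omega> / (c * Y1 \<omega>))"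
  using bounded_rv_divide_Y1[of "\<lambda>\<omega>. f \<omega> / c"] by (simp add: divide_divide_eq_left)

definition Ynext :: "'a \<Rightarrow> real" where "Ynext \<omega> = Y0 \<omega> + par (2 * Y1 \<omega>) (2 * Y2 \<omega>)"

lemma Ynext_bounds: "\<omega> \<in> space M \<Longrightarrow> a + a * k \<le> Ynext \<omega> \<and> Ynext \<omega> \<le> b + b * k"
  using par_double_bounds[of "a*k" "Y1 \<omega>" "b*k" "Y2 \<omega>"] Y0_bounds Y1_bounds Y2_bounds akpos unfolding Ynext_def by force

lemma bounded_rv_Ynext[simp]: "bounded_rv Ynext"
proof (rule bounded_rvI[where B="b + b*k"])
  show "Ynext \<in> borel_measurable M" unfolding Ynext_def by measurable
  fix \<omega> assume "\<omega> \<in> space M" then show "\<bar>Ynext \<omega>\<bar> \<le> b + b * k" using Ynext_bounds[of \<omega>] akpos ab by auto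
qed
lemma bounded_rv_divide_Ynext[simp]: "bounded_rv f \<Longrightarrow> bounded_rv (\<lambda>\<omega>. f \<omega> / Ynext \<omega>)"
  using akpos Ynext_bounds ab by (intro bounded_rv_divide[where d="a + a*k"]) auto

definition "mean_inv_Y1 = (\<integral>\<omega>. 1 / Y1 \<omega> \<partial>M)"
definition "var_inv_Y1 = (\<integral>\<omega>. (1 / Y1 \<omega> - mean_inv_Y1)^2 \<partial>M)"
definition "m4_inv_Y1 = (\<integral>\<omega>. (1 / Y1 \<omega> - mean_inv_Y1)^4 \<partial>M)"

lemma Y1pos: "\<omega> \<in> space M \<Longrightarrow> 0 < Y1 \<omega>" using Y1_bounds akpos by (meson less_le_trans)
lemma Y2pos: "\<omega> \<in> space M \<Longrightarrow> 0 < Y2 \<omega>" using Y2_bounds akpos by (meson less_le_trans)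
lemma Y0pos: "\<omega> \<in> space M \<Longrightarrow> 0 < Y0 \<omega>" using Y0_bounds ab by (meson less_le_trans)

lemma inverse_Y1_bounds: "\<omega> \<in> space M \<Longrightarrow> 1/(b*k) \<le> 1/Y1 \<omega> \<and> 1/Y1 \<omega> \<le> 1/(a*k)"
proof -
  assume w: "\<omega> \<in> space M"
  have "0 < b*k" using ab k1 by simp
  then show ?thesis using Y1_bounds[OF w] akpos ab k1 Y1pos[OF w] by (auto intro!: divide_left_mono mult_pos_pos)
qed

lemma mean_inv_Y1_bounds: "1/(b*k) \<le> mean_inv_Y1 \<and> mean_inv_Y1 \<le> 1/(a*k)"
  unfolding mean_inv_Y1_def by (rule integral_between) (auto dest: inverse_Y1_bounds)

lemma mean_inv_Y1_pos: "0 < mean_inv_Y1"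
proof -
  have "0 < 1/(b*k)" using ab k1 by simp
  then show ?thesis using mean_inv_Y1_bounds by linarith
qed

lemma Y0_mult_mean_inv_Y1_nonneg[simp]: "\<omega> \<in> space M \<Longrightarrow> 0 \<le> Y0 \<omega> * mean_inv_Y1"
  using Y0pos[of \<omega>] mean_inv_Y1_pos by simp

lemma var_inv_Y1_nonneg: "0 \<le> var_inv_Y1" unfolding var_inv_Y1_def by (intro integral_nonneg_AE) auto
lemma m4_inv_Y1_nonneg: "0 \<le> m4_inv_Y1" unfolding m4_inv_Y1_def by (intro integral_nonneg_AE) auto

lemma integral_inv_Y1_centered: "(\<integral>\<omega>. 1/Y1 \<omega> - mean_inv_Y1 \<partial>M) = 0" by (simp add: mean_inv_Y1_def prob_space)
lemma integral_inv_Y2_centered: "(\<integral>\<omega>. 1/Y2 \<omega> - mean_inv_Y1 \<partial>M) = 0"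
  using integral_Y2_eq_Y1[of "\<lambda>y. 1/y - mean_inv_Y1"] integral_inv_Y1_centered by simp
lemma integral_inv_Y2_power: "(\<integral>\<omega>. (1/Y2 \<omega> - mean_inv_Y1)^n \<partial>M) = (\<integral>\<omega>. (1/Y1 \<omega> - mean_inv_Y1)^n \<partial>M)"
  using integral_Y2_eq_Y1[of "\<lambda>y. (1/y - mean_inv_Y1)^n"] by simp

lemma integral_inv_sum_power2: "(\<integral>\<omega>. (1/Y1 \<omega> + 1/Y2 \<omega> - 2*mean_inv_Y1)^2 \<partial>M) = 2 * var_inv_Y1"
proof -
  have "(\<integral>\<omega>. (1/Y1 \<omega> + 1/Y2 \<omega> - 2*mean_inv_Y1)^2 \<partial>M) =
    (\<integral>\<omega>. (1/Y1 \<omega> - mean_inv_Y1)^2 + 2 * ((1/Y1 \<omega> - mean_inv_Y1) * (1/Y2 \<omega> - mean_inv_Y1)) + (1/Y2 \<omega> - mean_inv_Y1)^2 \<partial>M)"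
    by (rule Bochner_Integration.integral_cong) (simp_all only: inverse_sum_split power2_add_expand)
  also have "\<dots> = (\<integral>\<omega>. (1/Y1 \<omega> - mean_inv_Y1)^2 \<partial>M)
      + 2 * (\<integral>\<omega>. (1/Y1 \<omega> - mean_inv_Y1) * (1/Y2 \<omega> - mean_inv_Y1) \<partial>M) + (\<integral>\<omega>. (1/Y2 \<omega> - mean_inv_Y1)^2 \<partial>M)"
    by simp
  also have "(\<integral>\<omega>. (1/Y1 \<omega> - mean_inv_Y1) * (1/Y2 \<omega> - mean_inv_Y1) \<partial>M) = 0"
    using integral_mult_Y1_Y2[where f="\<lambda>y. 1/y - mean_inv_Y1" and g="\<lambda>z. 1/z - mean_inv_Y1"] integral_inv_Y2_centered by simp
  finally show ?thesis using integral_inv_Y2_power[of 2] by (simp add: var_inv_Y1_def)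
qed

lemma integral_inv_sum_power4: "(\<integral>\<omega>. (1/Y1 \<omega> + 1/Y2 \<omega> - 2*mean_inv_Y1)^4 \<partial>M) = 2 * m4_inv_Y1 + 6 * var_inv_Y1^2"
proof -
  let ?a = "\<lambda>\<omega>. 1/Y1 \<omega> - mean_inv_Y1" and ?b = "\<lambda>\<omega>. 1/Y2 \<omega> - mean_inv_Y1"
  have "(\<integral>\<omega>. (1/Y1 \<omega> + 1/Y2 \<omega> - 2*mean_inv_Y1)^4 \<partial>M) =
    (\<integral>\<omega>. (?a \<omega>)^4 + 4 * ((?a \<omega>)^3 * ?b \<omega>) + 6 * ((?a \<omega>)^2 * (?b \<omega>)^2) + 4 * (?a \<omega> * (?b \<omega>)^3) + (?b \<omega>)^4 \<partial>M)"
    by (rule Bochner_Integration.integral_cong) (simp_all only: inverse_sum_split power4_add_expand)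
  also have "\<dots> = (\<integral>\<omega>. (?a \<omega>)^4 \<partial>M) + 4 * (\<integral>\<omega>. (?a \<omega>)^3 * ?b \<omega> \<partial>M) + 6 * (\<integral>\<omega>. (?a \<omega>)^2 * (?b \<omega>)^2 \<partial>M)
      + 4 * (\<integral>\<omega>. ?a \<omega> * (?b \<omega>)^3 \<partial>M) + (\<integral>\<omega>. (?b \<omega>)^4 \<partial>M)"
    by simp
  also have "(\<integral>\<omega>. (?a \<omega>)^3 * ?b \<omega> \<partial>M) = 0"
    using integral_mult_Y1_Y2[where f="\<lambda>y. (1/y - mean_inv_Y1)^3" and g="\<lambda>z. 1/z - mean_inv_Y1"] integral_inv_Y2_centered by simp
  also have "(\<integral>\<omega>. ?a \<omega> * (?b \<omega>)^3 \<partial>M) = 0"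
    using integral_mult_Y1_Y2[where f="\<lambda>y. 1/y - mean_inv_Y1" and g="\<lambda>z. (1/z - mean_inv_Y1)^3"] integral_inv_Y1_centered by simp
  also have "(\<integral>\<omega>. (?a \<omega>)^2 * (?b \<omega>)^2 \<partial>M) = var_inv_Y1^2"
    using integral_mult_Y1_Y2[where f="\<lambda>y. (1/y - mean_inv_Y1)^2" and g="\<lambda>z. (1/z - mean_inv_Y1)^2"] integral_inv_Y2_power[of 2]
      by (simp add: var_inv_Y1_def power2_eq_square)
  finally show ?thesis using integral_inv_Y2_power[of 4] by (simp add: m4_inv_Y1_def)
qed

text \<open>With \<open>S = 1/Y1 + 1/Y2\<close> one has \<open>1/Ynext = S/(Y0 S + 2)\<close>; \<open>cond_approx\<close> and \<open>slope\<close> are the value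
  and the derivative of this function of \<open>S\<close> at \<open>S = 2 mean_inv_Y1\<close>, and \<open>inv_fluct = S - 2 mean_inv_Y1\<close>.\<close>

definition "cond_err = (b - a) / (a * k)^2"
definition "cond_lower = 2*mean_inv_Y1/(2*b*mean_inv_Y1+2)"
definition "cond_approx \<omega> = 2*mean_inv_Y1/(2*Y0 \<omega>*mean_inv_Y1+2)"
definition "inv_fluct \<omega> = 1/Y1 \<omega> + 1/Y2 \<omega> - 2*mean_inv_Y1"
definition "inv_remainder \<omega> = 1/Ynext \<omega> - cond_approx \<omega>"
definition "slope \<omega> = 2 / (2*Y0 \<omega>*mean_inv_Y1+2)^2"

lemma denominator_ge_2: "\<omega> \<in> space M \<Longrightarrow> 2 \<le> 2*Y0 \<omega>*mean_inv_Y1+2"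
proof -
  assume w: "\<omega> \<in> space M"
  have "0 \<le> Y0 \<omega> * mean_inv_Y1" using Y0pos[OF w] mean_inv_Y1_pos by simp
  then show ?thesis by simp
qed

lemma bounded_rv_slope[simp]: "bounded_rv slope"
  unfolding slope_def
proof (rule bounded_rv_divide[where d=4])
  fix \<omega> assume w: "\<omega> \<in> space M"
  show "4 \<le> (2*Y0 \<omega>*mean_inv_Y1+2)^2" using denominator_ge_2[OF w] power_mono[of 2 "2*Y0 \<omega>*mean_inv_Y1+2" 2] by simp
qed simp_all

lemma bounded_rv_cond_approx[simp]: "bounded_rv cond_approx"
  unfolding cond_approx_def by (rule bounded_rv_divide[where d=2]) (auto simp: denominator_ge_2)
lemma bounded_rv_inv_fluct[simp]: "bounded_rv inv_fluct" unfolding inv_fluct_def by simp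
lemma bounded_rv_inv_remainder[simp]: "bounded_rv inv_remainder" unfolding inv_remainder_def by simp

lemma inv_remainder_bounds:
  "\<omega> \<in> space M \<Longrightarrow> \<bar>inv_remainder \<omega>\<bar> \<le> \<bar>inv_fluct \<omega>\<bar>/2
    \<and> \<bar>inv_remainder \<omega> - 2*inv_fluct \<omega>/(2*Y0 \<omega>*mean_inv_Y1+2)^2\<bar> \<le> b*(inv_fluct \<omega>)^2/4"
  using inverse_step_expansion[of "Y0 \<omega>" b "Y1 \<omega>" "Y2 \<omega>" mean_inv_Y1]
    Y0pos[of \<omega>] Y0_bounds[of \<omega>] Y1pos[of \<omega>] Y2pos[of \<omega>] mean_inv_Y1_pos
  unfolding inv_remainder_def cond_approx_def inv_fluct_def Ynext_def by (simp add: less_imp_le)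

lemma cond_approx_bounds: "\<omega> \<in> space M \<Longrightarrow> cond_lower \<le> cond_approx \<omega> \<and> cond_approx \<omega> \<le> cond_lower + cond_err"
proof -
  assume w: "\<omega> \<in> space M"
  have "(b-a)*mean_inv_Y1^2 \<le> (b-a)*(1/(a*k))^2"
    using mean_inv_Y1_bounds mean_inv_Y1_pos ab by (intro mult_left_mono power_mono) auto
  then have "(b-a)*mean_inv_Y1^2 \<le> cond_err" by (simp add: cond_err_def power_divide)
  then show ?thesis
    using inverse_affine_diff_bounds[of a "Y0 \<omega>" b mean_inv_Y1] Y0_bounds[OF w] ab mean_inv_Y1_pos
    unfolding cond_approx_def cond_lower_def by auto
qed

lemma var_inverse_step: "(\<integral>\<omega>. (1/Ynext \<omega> - (\<integral>\<omega>. 1/Ynext \<omega> \<partial>M))^2 \<partial>M) \<le> 3/4 * var_inv_Y1 + 3 * cond_err^2"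
proof -
  have "(\<integral>\<omega>. (1/Ynext \<omega> - (\<integral>\<omega>. 1/Ynext \<omega> \<partial>M))^2 \<partial>M) \<le> (\<integral>\<omega>. (1/Ynext \<omega> - cond_lower)^2 \<partial>M)"
    by (rule variance_le) simp
  also have "\<dots> \<le> (\<integral>\<omega>. 3/8 * (inv_fluct \<omega>)^2 + 3 * cond_err^2 \<partial>M)"
  proof (rule integral_mono_bounded)
    fix \<omega> assume w: "\<omega> \<in> space M"
    have e1: "1/Ynext \<omega> - cond_lower = inv_remainder \<omega> + (cond_approx \<omega> - cond_lower)" unfolding inv_remainder_def by simp
    have t: "(inv_remainder \<omega>)^2 \<le> (inv_fluct \<omega>)^2/4"
    proof -
      have "\<bar>inv_remainder \<omega>\<bar>^2 \<le> (\<bar>inv_fluct \<omega>\<bar>/2)^2" using inv_remainder_bounds[OF w] by (intro power_mono) auto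
      then show ?thesis by (simp add: power_divide)
    qed
    have g: "(cond_approx \<omega> - cond_lower)^2 \<le> cond_err^2" using cond_approx_bounds[OF w] by (intro power_mono) auto
    show "(1/Ynext \<omega> - cond_lower)^2 \<le> 3/8 * (inv_fluct \<omega>)^2 + 3 * cond_err^2"
      unfolding e1 using power2_add_le_3[of "inv_remainder \<omega>" "cond_approx \<omega> - cond_lower"] t g by linarith
  qed simp_all
  also have "\<dots> = 3/8 * (2 * var_inv_Y1) + 3 * cond_err^2"
    using integral_inv_sum_power2 by (simp add: inv_fluct_def prob_space)
  finally show ?thesis by simp
qed

lemma abs_integral_inv_remainder_le: "\<bar>\<integral>\<omega>. inv_remainder \<omega> \<partial>M\<bar> \<le> b * var_inv_Y1 / 2"
proof -
  have "(\<integral>\<omega>. slope \<omega> * inv_fluct \<omega> \<partial>M) = (\<integral>\<omega>. slope \<omega> \<partial>M) * (\<integral>\<omega>. inv_fluct \<omega> \<partial>M)"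
    using integral_mult_Y0_children[where f="\<lambda>x. 2 / (2*x*mean_inv_Y1+2)^2" and \<phi>="\<lambda>p. 1/fst p + 1/snd p - 2*mean_inv_Y1"]
    using bounded_rv_slope[unfolded slope_def] by (simp add: inv_fluct_def slope_def[abs_def])
  also have "(\<integral>\<omega>. inv_fluct \<omega> \<partial>M) = 0" using integral_inv_Y1_centered integral_inv_Y2_centered unfolding inv_fluct_def
    by (simp add: prob_space mean_inv_Y1_def)
  finally have z: "(\<integral>\<omega>. slope \<omega> * inv_fluct \<omega> \<partial>M) = 0" by simp
  have "(\<integral>\<omega>. inv_remainder \<omega> \<partial>M) = (\<integral>\<omega>. inv_remainder \<omega> - slope \<omega> * inv_fluct \<omega> \<partial>M) + (\<integral>\<omega>. slope \<omega> * inv_fluct \<omega> \<partial>M)"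
    by simp
  also have "\<dots> = (\<integral>\<omega>. inv_remainder \<omega> - slope \<omega> * inv_fluct \<omega> \<partial>M)" using z by simp
  finally have "\<bar>\<integral>\<omega>. inv_remainder \<omega> \<partial>M\<bar> \<le> (\<integral>\<omega>. \<bar>inv_remainder \<omega> - slope \<omega> * inv_fluct \<omega>\<bar> \<partial>M)"
    using abs_integral_le[of "\<lambda>\<omega>. inv_remainder \<omega> - slope \<omega> * inv_fluct \<omega>"] by simp
  also have "\<dots> \<le> (\<integral>\<omega>. b * (inv_fluct \<omega>)^2 / 4 \<partial>M)"
  proof (rule integral_mono_bounded)
    fix \<omega> assume w: "\<omega> \<in> space M"
    have "slope \<omega> * inv_fluct \<omega> = 2*inv_fluct \<omega>/(2*Y0 \<omega>*mean_inv_Y1+2)^2" by (simp add: slope_def)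
    then show "\<bar>inv_remainder \<omega> - slope \<omega> * inv_fluct \<omega>\<bar> \<le> b * (inv_fluct \<omega>)^2 / 4" using inv_remainder_bounds[OF w] by simp
  qed simp_all
  also have "\<dots> = b * var_inv_Y1 / 2" using integral_inv_sum_power2 by (simp add: inv_fluct_def)
  finally show ?thesis .
qed

lemma m4_inverse_step:
  "(\<integral>\<omega>. (1/Ynext \<omega> - (\<integral>\<omega>. 1/Ynext \<omega> \<partial>M))^4 \<partial>M) \<le> m4_inv_Y1/3 + var_inv_Y1^2 + 65*b^4* var_inv_Y1^4 + 729*cond_err^4"
proof -
  define ET where "ET = (\<integral>\<omega>. inv_remainder \<omega> \<partial>M)"
  define Eg where "Eg = (\<integral>\<omega>. cond_approx \<omega> \<partial>M)"
  have mean_split: "(\<integral>\<omega>. 1/Ynext \<omega> \<partial>M) = ET + Eg"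
  proof -
    have "(\<integral>\<omega>. 1/Ynext \<omega> \<partial>M) = (\<integral>\<omega>. inv_remainder \<omega> + cond_approx \<omega> \<partial>M)" by (simp add: inv_remainder_def)
    then show ?thesis by (simp add: ET_def Eg_def)
  qed
  have Eg: "cond_lower \<le> Eg \<and> Eg \<le> cond_lower + cond_err" unfolding Eg_def
    by (rule integral_between) (auto dest: cond_approx_bounds)
  \<comment> \<open>The weight \<open>9/8\<close> of \<open>power2_add_le_9\<close> keeps the leading factor \<open>2 (729/512)\<^sup>2/16\<close> below \<open>1/3\<close>.\<close>
  let ?A = "729/512 :: real" and ?B = "729 :: real"
  have "(\<integral>\<omega>. (1/Ynext \<omega> - (\<integral>\<omega>. 1/Ynext \<omega> \<partial>M))^4 \<partial>M) \<le> (\<integral>\<omega>. ?A*(?A*(inv_fluct \<omega>)^4/16 + ?B*ET^4) + ?B*cond_err^4 \<partial>M)"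
  proof (rule integral_mono_bounded)
    fix \<omega> assume w: "\<omega> \<in> space M"
    have e1: "1/Ynext \<omega> - (\<integral>\<omega>. 1/Ynext \<omega> \<partial>M) = (inv_remainder \<omega> - ET) + (cond_approx \<omega> - Eg)" unfolding mean_split inv_remainder_def
      by simp
    have t: "(inv_remainder \<omega>)^4 \<le> (inv_fluct \<omega>)^4/16"
    proof -
      have "\<bar>inv_remainder \<omega>\<bar>^4 \<le> (\<bar>inv_fluct \<omega>\<bar>/2)^4" using inv_remainder_bounds[OF w] by (intro power_mono) auto
      then show ?thesis by (simp add: power_divide power_even_abs_numeral)
    qed
    have g: "(cond_approx \<omega> - Eg)^4 \<le> cond_err^4"
    proof -
      have "\<bar>cond_approx \<omega> - Eg\<bar> \<le> cond_err" using cond_approx_bounds[OF w] Eg by auto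
      then have "\<bar>cond_approx \<omega> - Eg\<bar>^4 \<le> cond_err^4" by (intro power_mono) auto
      then show ?thesis by (simp add: power_even_abs_numeral)
    qed
    have h: "(inv_remainder \<omega> - ET)^4 \<le> ?A*(inv_remainder \<omega>)^4 + ?B*ET^4"
      using power4_add_le_729[of "inv_remainder \<omega>" "- ET"] by simp
    have "(1/Ynext \<omega> - (\<integral>\<omega>. 1/Ynext \<omega> \<partial>M))^4 \<le> ?A*(inv_remainder \<omega> - ET)^4 + ?B*(cond_approx \<omega> - Eg)^4"
      unfolding e1 by (rule power4_add_le_729)
    also have "\<dots> \<le> ?A*(?A*(inv_fluct \<omega>)^4/16 + ?B*ET^4) + ?B*cond_err^4"
      using h t g by (intro add_mono mult_left_mono) auto
    finally show "(1/Ynext \<omega> - (\<integral>\<omega>. 1/Ynext \<omega> \<partial>M))^4 \<le> ?A*(?A*(inv_fluct \<omega>)^4/16 + ?B*ET^4) + ?B*cond_err^4" .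
  qed simp_all
  also have "\<dots> = ?A*(?A*(2*m4_inv_Y1 + 6* var_inv_Y1^2)/16 + ?B*ET^4) + ?B*cond_err^4"
    using integral_inv_sum_power4 by (simp add: inv_fluct_def prob_space)
  also have "\<dots> \<le> ?A*(?A*(2*m4_inv_Y1 + 6* var_inv_Y1^2)/16 + ?B*(b* var_inv_Y1/2)^4) + ?B*cond_err^4"
  proof -
    have "\<bar>ET\<bar>^4 \<le> (b* var_inv_Y1/2)^4" using abs_integral_inv_remainder_le unfolding ET_def by (intro power_mono) auto
    then have "ET^4 \<le> (b* var_inv_Y1/2)^4" by (simp add: power_even_abs_numeral)
    then show ?thesis by simp
  qed
  also have "\<dots> \<le> m4_inv_Y1/3 + var_inv_Y1^2 + 65*b^4* var_inv_Y1^4 + 729*cond_err^4"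
    using m4_inv_Y1_nonneg var_inv_Y1_nonneg by (simp add: power_divide power_mult_distrib field_simps)
  finally show ?thesis .
qed

definition "mean_Y1 = (\<integral>\<omega>. Y1 \<omega> \<partial>M)"
definition "var_Y1 = (\<integral>\<omega>. (Y1 \<omega> - mean_Y1)^2 \<partial>M)"
definition "m4_Y1 = (\<integral>\<omega>. (Y1 \<omega> - mean_Y1)^4 \<partial>M)"
definition "mu = (\<integral>\<omega>. Y0 \<omega> \<partial>M)"
definition "sig = (\<integral>\<omega>. (Y0 \<omega> - mu)^2 \<partial>M)"
definition "defect \<omega> = (Y1 \<omega> - Y2 \<omega>)^2 / (2*(Y1 \<omega> + Y2 \<omega>))"

lemma bounded_rv_defect[simp]: "bounded_rv defect"
  unfolding defect_def
proof (rule bounded_rv_divide[where d="2*(a*k)"])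
  fix \<omega> assume w: "\<omega> \<in> space M"
  have "a*k \<le> Y1 \<omega>" "a*k \<le> Y2 \<omega>" using Y1_bounds[OF w] Y2_bounds[OF w] by auto
  then show "2*(a*k) \<le> 2*(Y1 \<omega> + Y2 \<omega>)" using akpos by (simp add: algebra_simps)
qed (use akpos in simp_all)

lemma S_pos: "\<omega> \<in> space M \<Longrightarrow> 0 < Y1 \<omega> + Y2 \<omega>" using Y1pos Y2pos by (simp add: add_pos_pos)

lemma Ynext_eq: "\<omega> \<in> space M \<Longrightarrow> Ynext \<omega> = Y0 \<omega> + (Y1 \<omega> + Y2 \<omega>)/2 - defect \<omega>"
  unfolding Ynext_def defect_def using par_double_eq[OF S_pos] by simp

lemma mean_Y1_bounds: "a*k \<le> mean_Y1 \<and> mean_Y1 \<le> b*k" unfolding mean_Y1_def by (rule integral_between) (auto dest: Y1_bounds)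

lemma integral_Y1_centered: "(\<integral>\<omega>. Y1 \<omega> - mean_Y1 \<partial>M) = 0" by (simp add: mean_Y1_def prob_space)
lemma integral_Y2_power: "(\<integral>\<omega>. (Y2 \<omega> - mean_Y1)^n \<partial>M) = (\<integral>\<omega>. (Y1 \<omega> - mean_Y1)^n \<partial>M)"
  using integral_Y2_eq_Y1[of "\<lambda>y. (y - mean_Y1)^n"] by simp
lemma integral_Y2_centered: "(\<integral>\<omega>. Y2 \<omega> - mean_Y1 \<partial>M) = 0" using integral_Y2_power[of 1] integral_Y1_centered by simp

lemma var_Y1_nonneg: "0 \<le> var_Y1" unfolding var_Y1_def by (intro integral_nonneg_AE) auto
lemma m4_Y1_nonneg: "0 \<le> m4_Y1" unfolding m4_Y1_def by (intro integral_nonneg_AE) auto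

lemma mu_bounds: "a \<le> mu" "mu \<le> b"
  using integral_between[of Y0 a b] Y0_bounds by (auto simp: mu_def)

lemma sig_bounds: "0 \<le> sig" "sig \<le> (b-a)^2"
proof -
  have "0 \<le> (Y0 \<omega> - mu)^2 \<and> (Y0 \<omega> - mu)^2 \<le> (b-a)^2" if "\<omega> \<in> space M" for \<omega>
  proof -
    have "\<bar>Y0 \<omega> - mu\<bar> \<le> b - a" using Y0_bounds[OF that] mu_bounds by (auto simp: abs_le_iff)
    then have "\<bar>Y0 \<omega> - mu\<bar>^2 \<le> (b-a)^2" by (intro power_mono) auto
    then show ?thesis by simp
  qed
  then have "0 \<le> sig \<and> sig \<le> (b-a)^2" unfolding sig_def by (intro integral_between) auto
  then show "0 \<le> sig" "sig \<le> (b-a)^2" by auto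
qed

lemma integral_diff_power2: "(\<integral>\<omega>. (Y1 \<omega> - Y2 \<omega>)^2 \<partial>M) = 2 * var_Y1"
proof -
  let ?a = "\<lambda>\<omega>. Y1 \<omega> - mean_Y1" and ?b = "\<lambda>\<omega>. Y2 \<omega> - mean_Y1"
  have "(\<integral>\<omega>. (Y1 \<omega> - Y2 \<omega>)^2 \<partial>M) = (\<integral>\<omega>. (?a \<omega>)^2 - 2 * (?a \<omega> * ?b \<omega>) + (?b \<omega>)^2 \<partial>M)"
    by (rule Bochner_Integration.integral_cong) (simp_all add: power2_eq_square algebra_simps)
  also have "\<dots> = (\<integral>\<omega>. (?a \<omega>)^2 \<partial>M) - 2 * (\<integral>\<omega>. ?a \<omega> * ?b \<omega> \<partial>M) + (\<integral>\<omega>. (?b \<omega>)^2 \<partial>M)"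
    by simp
  also have "(\<integral>\<omega>. ?a \<omega> * ?b \<omega> \<partial>M) = 0"
    using integral_mult_Y1_Y2[where f="\<lambda>y. y - mean_Y1" and g="\<lambda>z. z - mean_Y1"] integral_Y2_centered by simp
  finally show ?thesis using integral_Y2_power[of 2] by (simp add: var_Y1_def)
qed

lemma integral_diff_power2_abs_sum_le: "(\<integral>\<omega>. (Y1 \<omega> - Y2 \<omega>)^2 * \<bar>Y1 \<omega> + Y2 \<omega> - 2*mean_Y1\<bar> \<partial>M) \<le> 4*(m4_Y1 + var_Y1)"
proof -
  have "(\<integral>\<omega>. (Y1 \<omega> - Y2 \<omega>)^2 * \<bar>Y1 \<omega> + Y2 \<omega> - 2*mean_Y1\<bar> \<partial>M) \<le>
     (\<integral>\<omega>. 2*((Y1 \<omega> - mean_Y1)^4 + (Y1 \<omega> - mean_Y1)^2 + (Y2 \<omega> - mean_Y1)^4 + (Y2 \<omega> - mean_Y1)^2) \<partial>M)"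
  proof (rule integral_mono_bounded)
    fix \<omega>
    have "(Y1 \<omega> - mean_Y1) - (Y2 \<omega> - mean_Y1) = Y1 \<omega> - Y2 \<omega>"
      and "(Y1 \<omega> - mean_Y1) + (Y2 \<omega> - mean_Y1) = Y1 \<omega> + Y2 \<omega> - 2*mean_Y1" by simp_all
    then show "(Y1 \<omega> - Y2 \<omega>)^2 * \<bar>Y1 \<omega> + Y2 \<omega> - 2*mean_Y1\<bar>
        \<le> 2*((Y1 \<omega> - mean_Y1)^4 + (Y1 \<omega> - mean_Y1)^2 + (Y2 \<omega> - mean_Y1)^4 + (Y2 \<omega> - mean_Y1)^2)"
      using power2_diff_mult_abs_add_le[of "Y1 \<omega> - mean_Y1" "Y2 \<omega> - mean_Y1"] by simp
  qed simp_all
  also have "\<dots> = 4*(m4_Y1 + var_Y1)" using integral_Y2_power[of 2] integral_Y2_power[of 4] by (simp add: m4_Y1_def var_Y1_def)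
  finally show ?thesis .
qed

lemma integral_diff_power4_le: "(\<integral>\<omega>. (Y1 \<omega> - Y2 \<omega>)^4 \<partial>M) \<le> 16*m4_Y1"
proof -
  have "(\<integral>\<omega>. (Y1 \<omega> - Y2 \<omega>)^4 \<partial>M) \<le> (\<integral>\<omega>. 8*((Y1 \<omega> - mean_Y1)^4 + (Y2 \<omega> - mean_Y1)^4) \<partial>M)"
  proof (rule integral_mono_bounded)
    fix \<omega> show "(Y1 \<omega> - Y2 \<omega>)^4 \<le> 8*((Y1 \<omega> - mean_Y1)^4 + (Y2 \<omega> - mean_Y1)^4)"
    proof -
      have e1: "(Y1 \<omega> - mean_Y1) - (Y2 \<omega> - mean_Y1) = Y1 \<omega> - Y2 \<omega>" by simp
      show ?thesis using power4_diff_le[of "Y1 \<omega> - mean_Y1" "Y2 \<omega> - mean_Y1", unfolded e1] .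
    qed
  qed simp_all
  also have "\<dots> = 16*m4_Y1" using integral_Y2_power[of 4] by (simp add: m4_Y1_def)
  finally show ?thesis .
qed

lemma integral_Ynext: "(\<integral>\<omega>. Ynext \<omega> \<partial>M) = mu + mean_Y1 - (\<integral>\<omega>. defect \<omega> \<partial>M)"
proof -
  have "(\<integral>\<omega>. Ynext \<omega> \<partial>M) = (\<integral>\<omega>. Y0 \<omega> + (Y1 \<omega> + Y2 \<omega>)/2 - defect \<omega> \<partial>M)"
    by (rule Bochner_Integration.integral_cong) (simp_all add: Ynext_eq)
  also have "\<dots> = mu + mean_Y1 - (\<integral>\<omega>. defect \<omega> \<partial>M)"
    using integral_Y2_centered integral_Y1_centered by (simp add: mu_def mean_Y1_def prob_space)
  finally show ?thesis .
qed

lemma defect_bounds: "\<omega> \<in> space M \<Longrightarrow> 0 \<le> defect \<omega> \<and> defect \<omega> \<le> (Y1 \<omega> - Y2 \<omega>)^2/(4*(a*k))"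
  unfolding defect_def using quotient_defect_bounds[OF akpos, of "Y1 \<omega>" "Y2 \<omega>"] Y1_bounds Y2_bounds by auto

lemma integral_defect_bounds: "0 \<le> (\<integral>\<omega>. defect \<omega> \<partial>M) \<and> (\<integral>\<omega>. defect \<omega> \<partial>M) \<le> var_Y1/(2*(a*k))"
proof
  show "0 \<le> (\<integral>\<omega>. defect \<omega> \<partial>M)" using defect_bounds by (intro integral_nonneg_AE) auto
  have "(\<integral>\<omega>. defect \<omega> \<partial>M) \<le> (\<integral>\<omega>. (Y1 \<omega> - Y2 \<omega>)^2/(4*(a*k)) \<partial>M)"
    by (rule integral_mono_bounded) (use defect_bounds in auto)
  also have "\<dots> = var_Y1/(2*(a*k))" using integral_diff_power2 by simp
  finally show "(\<integral>\<omega>. defect \<omega> \<partial>M) \<le> var_Y1/(2*(a*k))" .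
qed

lemma integral_defect_approx: "\<bar>(\<integral>\<omega>. defect \<omega> \<partial>M) - var_Y1/(2*mean_Y1)\<bar> \<le> (m4_Y1 + var_Y1)/(2*(a*k)^2)"
proof -
  have "(\<integral>\<omega>. defect \<omega> \<partial>M) - var_Y1/(2*mean_Y1) = (\<integral>\<omega>. defect \<omega> - (Y1 \<omega> - Y2 \<omega>)^2/(4*mean_Y1) \<partial>M)"
    using integral_diff_power2 mean_Y1_bounds akpos by simp
  then have "\<bar>(\<integral>\<omega>. defect \<omega> \<partial>M) - var_Y1/(2*mean_Y1)\<bar> \<le> (\<integral>\<omega>. \<bar>defect \<omega> - (Y1 \<omega> - Y2 \<omega>)^2/(4*mean_Y1)\<bar> \<partial>M)"
    using abs_integral_le[of "\<lambda>\<omega>. defect \<omega> - (Y1 \<omega> - Y2 \<omega>)^2/(4*mean_Y1)"] by simp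
  also have "\<dots> \<le> (\<integral>\<omega>. (Y1 \<omega> - Y2 \<omega>)^2 * \<bar>Y1 \<omega> + Y2 \<omega> - 2*mean_Y1\<bar> / (8*(a*k)^2) \<partial>M)"
  proof (rule integral_mono_bounded)
    fix \<omega> assume w: "\<omega> \<in> space M"
    show "\<bar>defect \<omega> - (Y1 \<omega> - Y2 \<omega>)^2/(4*mean_Y1)\<bar> \<le> (Y1 \<omega> - Y2 \<omega>)^2 * \<bar>Y1 \<omega> + Y2 \<omega> - 2*mean_Y1\<bar> / (8*(a*k)^2)"
      unfolding defect_def using quotient_defect_approx[OF akpos, of "Y1 \<omega>" "Y2 \<omega>" mean_Y1] Y1_bounds[OF w] Y2_bounds[OF w] mean_Y1_bounds
        by auto
  qed simp_all
  also have "\<dots> = (\<integral>\<omega>. (Y1 \<omega> - Y2 \<omega>)^2 * \<bar>Y1 \<omega> + Y2 \<omega> - 2*mean_Y1\<bar> \<partial>M) / (8*(a*k)^2)" by simp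
  also have "\<dots> \<le> 4*(m4_Y1 + var_Y1) / (8*(a*k)^2)" using integral_diff_power2_abs_sum_le akpos by (intro divide_right_mono) auto
  also have "\<dots> = (m4_Y1 + var_Y1)/(2*(a*k)^2)" using akpos by (simp add: divide_simps)
  finally show ?thesis .
qed

definition defect_fun :: "real \<times> real \<Rightarrow> real" where "defect_fun p = (fst p - snd p)^2 / (2*(fst p + snd p))"
lemma defect_fun_measurable[measurable]: "defect_fun \<in> borel_measurable (borel \<Otimes>\<^sub>M borel)"
  unfolding defect_fun_def by measurable
lemma defect_eq_defect_fun: "defect \<omega> = defect_fun (Y1 \<omega>, Y2 \<omega>)" by (simp add: defect_def defect_fun_def)
lemma bounded_rv_defect_fun[simp]:
  "bounded_rv (\<lambda>\<omega>. defect_fun (Y1 \<omega>, Y2 \<omega>))"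
  using bounded_rv_defect by (simp add: defect_eq_defect_fun[abs_def])

lemma var_Ynext_eq:
  "(\<integral>\<omega>. (Ynext \<omega> - (\<integral>\<omega>. Ynext \<omega> \<partial>M))^2 \<partial>M) = sig + var_Y1/2
     - 2 * (\<integral>\<omega>. ((Y1 \<omega> + Y2 \<omega>)/2 - mean_Y1) * defect \<omega> \<partial>M)
     + (\<integral>\<omega>. (defect \<omega> - (\<integral>\<omega>. defect \<omega> \<partial>M))^2 \<partial>M)"
proof -
  define ED where "ED = (\<integral>\<omega>. defect \<omega> \<partial>M)"
  let ?P = "\<lambda>\<omega>. Y0 \<omega> - mu"
  let ?A = "\<lambda>\<omega>. (Y1 \<omega> + Y2 \<omega>)/2 - mean_Y1"
  let ?Z = "\<lambda>\<omega>. (Y1 \<omega> + Y2 \<omega>)/2 - mean_Y1 - (defect_fun (Y1 \<omega>, Y2 \<omega>) - ED)"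
  have "(\<integral>\<omega>. (Ynext \<omega> - (\<integral>\<omega>. Ynext \<omega> \<partial>M))^2 \<partial>M) = (\<integral>\<omega>. (?P \<omega>)^2 + 2 * (?P \<omega> * ?Z \<omega>) + (?Z \<omega>)^2 \<partial>M)"
  proof (rule Bochner_Integration.integral_cong)
    fix \<omega> assume w: "\<omega> \<in> space M"
    have "Ynext \<omega> - (\<integral>\<omega>. Ynext \<omega> \<partial>M) = ?P \<omega> + ?Z \<omega>"
      unfolding integral_Ynext Ynext_eq[OF w] ED_def defect_eq_defect_fun by simp
    then show "(Ynext \<omega> - (\<integral>\<omega>. Ynext \<omega> \<partial>M))^2 = (?P \<omega>)^2 + 2 * (?P \<omega> * ?Z \<omega>) + (?Z \<omega>)^2"
      by (simp only: power2_add_expand)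
  qed simp
  also have "\<dots> = (\<integral>\<omega>. (?P \<omega>)^2 \<partial>M) + 2 * (\<integral>\<omega>. ?P \<omega> * ?Z \<omega> \<partial>M) + (\<integral>\<omega>. (?Z \<omega>)^2 \<partial>M)"
    by simp
  also have "(\<integral>\<omega>. ?P \<omega> * ?Z \<omega> \<partial>M) = (\<integral>\<omega>. ?P \<omega> \<partial>M) * (\<integral>\<omega>. ?Z \<omega> \<partial>M)"
    using integral_mult_Y0_children[where f="\<lambda>x. x - mu" and \<phi>="\<lambda>p. (fst p + snd p)/2 - mean_Y1 - (defect_fun p - ED)"]
    by simp
  also have "(\<integral>\<omega>. ?P \<omega> \<partial>M) = 0" by (simp add: mu_def prob_space)
  also have "(\<integral>\<omega>. (?P \<omega>)^2 \<partial>M) = sig" by (simp add: sig_def)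
  also have "(\<integral>\<omega>. (?Z \<omega>)^2 \<partial>M)
      = (\<integral>\<omega>. (?A \<omega>)^2 \<partial>M) - 2 * (\<integral>\<omega>. ?A \<omega> * (defect \<omega> - ED) \<partial>M) + (\<integral>\<omega>. (defect \<omega> - ED)^2 \<partial>M)"
  proof -
    have "(\<integral>\<omega>. (?Z \<omega>)^2 \<partial>M) = (\<integral>\<omega>. (?A \<omega>)^2 - 2 * (?A \<omega> * (defect \<omega> - ED)) + (defect \<omega> - ED)^2 \<partial>M)"
      by (rule Bochner_Integration.integral_cong) (simp_all add: defect_eq_defect_fun power2_diff mult.assoc)
    then show ?thesis by simp
  qed
  also have "(\<integral>\<omega>. (?A \<omega>)^2 \<partial>M) = var_Y1/2"
  proof -
    have "(\<integral>\<omega>. (?A \<omega>)^2 \<partial>M)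
        = (\<integral>\<omega>. ((Y1 \<omega> - mean_Y1)^2 + 2*((Y1 \<omega> - mean_Y1)*(Y2 \<omega> - mean_Y1)) + (Y2 \<omega> - mean_Y1)^2)/4 \<partial>M)"
      by (rule Bochner_Integration.integral_cong) (simp_all add: power2_eq_square field_simps)
    also have "\<dots> = ((\<integral>\<omega>. (Y1 \<omega> - mean_Y1)^2 \<partial>M) + 2*(\<integral>\<omega>. (Y1 \<omega> - mean_Y1)*(Y2 \<omega> - mean_Y1) \<partial>M)
        + (\<integral>\<omega>. (Y2 \<omega> - mean_Y1)^2 \<partial>M))/4"
      by simp
    also have "(\<integral>\<omega>. (Y1 \<omega> - mean_Y1)*(Y2 \<omega> - mean_Y1) \<partial>M) = 0"
      using integral_mult_Y1_Y2[where f="\<lambda>y. y - mean_Y1" and g="\<lambda>z. z - mean_Y1"] integral_Y2_centered by simp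
    finally show ?thesis using integral_Y2_power[of 2] by (simp add: var_Y1_def)
  qed
  also have "(\<integral>\<omega>. ?A \<omega> * (defect \<omega> - ED) \<partial>M) = (\<integral>\<omega>. ?A \<omega> * defect \<omega> \<partial>M)"
  proof -
    have "(\<integral>\<omega>. ?A \<omega> * (defect \<omega> - ED) \<partial>M) = (\<integral>\<omega>. ?A \<omega> * defect \<omega> - ED * ?A \<omega> \<partial>M)"
      by (rule Bochner_Integration.integral_cong) (auto simp: field_simps)
    also have "\<dots> = (\<integral>\<omega>. ?A \<omega> * defect \<omega> \<partial>M) - ED * (\<integral>\<omega>. ?A \<omega> \<partial>M)"
      by simp
    also have "(\<integral>\<omega>. ?A \<omega> \<partial>M) = 0"
      using integral_Y2_centered integral_Y1_centered by (simp add: mean_Y1_def prob_space)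
    finally show ?thesis by simp
  qed
  finally show ?thesis by (simp add: ED_def)
qed

lemma abs_integral_mean_dev_mult_defect_le:
  "\<bar>\<integral>\<omega>. ((Y1 \<omega> + Y2 \<omega>)/2 - mean_Y1) * defect \<omega> \<partial>M\<bar> \<le> (m4_Y1 + var_Y1)/(2*(a*k))"
proof -
  let ?A = "\<lambda>\<omega>. (Y1 \<omega> + Y2 \<omega>)/2 - mean_Y1"
  have "\<bar>\<integral>\<omega>. ?A \<omega> * defect \<omega> \<partial>M\<bar> \<le> (\<integral>\<omega>. \<bar>?A \<omega> * defect \<omega>\<bar> \<partial>M)"
    using abs_integral_le[of "\<lambda>\<omega>. ?A \<omega> * defect \<omega>"] by simp
  also have "\<dots> \<le> (\<integral>\<omega>. (Y1 \<omega> - Y2 \<omega>)^2 * \<bar>Y1 \<omega> + Y2 \<omega> - 2*mean_Y1\<bar> / (8*(a*k)) \<partial>M)"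
  proof (rule integral_mono_bounded)
    fix \<omega> assume w: "\<omega> \<in> space M"
    have d: "0 \<le> defect \<omega>" "defect \<omega> \<le> (Y1 \<omega> - Y2 \<omega>)^2/(4*(a*k))" using defect_bounds[OF w] by auto
    have A: "?A \<omega> = (Y1 \<omega> + Y2 \<omega> - 2*mean_Y1)/2" by (simp add: field_simps)
    have "\<bar>?A \<omega> * defect \<omega>\<bar> = \<bar>Y1 \<omega> + Y2 \<omega> - 2*mean_Y1\<bar>/2 * defect \<omega>"
      unfolding A using d(1) by (simp add: abs_mult)
    also have "\<dots> \<le> \<bar>Y1 \<omega> + Y2 \<omega> - 2*mean_Y1\<bar>/2 * ((Y1 \<omega> - Y2 \<omega>)^2/(4*(a*k)))"
      using d by (intro mult_left_mono) auto
    finally show "\<bar>?A \<omega> * defect \<omega>\<bar> \<le> (Y1 \<omega> - Y2 \<omega>)^2 * \<bar>Y1 \<omega> + Y2 \<omega> - 2*mean_Y1\<bar> / (8*(a*k))"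
      by (simp add: mult_ac)
  qed simp_all
  also have "\<dots> = (\<integral>\<omega>. (Y1 \<omega> - Y2 \<omega>)^2 * \<bar>Y1 \<omega> + Y2 \<omega> - 2*mean_Y1\<bar> \<partial>M) / (8*(a*k))" by simp
  also have "\<dots> \<le> 4*(m4_Y1 + var_Y1) / (8*(a*k))"
    using integral_diff_power2_abs_sum_le akpos by (intro divide_right_mono) auto
  also have "\<dots> = (m4_Y1 + var_Y1)/(2*(a*k))" by (simp add: divide_simps)
  finally show ?thesis .
qed

lemma integral_defect_centered_power2_le:
  "(\<integral>\<omega>. (defect \<omega> - (\<integral>\<omega>. defect \<omega> \<partial>M))^2 \<partial>M) \<le> m4_Y1/(a*k)^2"
proof -
  have "(\<integral>\<omega>. (defect \<omega> - (\<integral>\<omega>. defect \<omega> \<partial>M))^2 \<partial>M) \<le> (\<integral>\<omega>. (defect \<omega>)^2 \<partial>M)"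
    using variance_le[of defect 0] by simp
  also have "\<dots> \<le> (\<integral>\<omega>. (Y1 \<omega> - Y2 \<omega>)^4 / (16*(a*k)^2) \<partial>M)"
  proof (rule integral_mono_bounded)
    fix \<omega> assume w: "\<omega> \<in> space M"
    have "(defect \<omega>)^2 \<le> ((Y1 \<omega> - Y2 \<omega>)^2/(4*(a*k)))^2"
      using defect_bounds[OF w] by (intro power_mono) auto
    then show "(defect \<omega>)^2 \<le> (Y1 \<omega> - Y2 \<omega>)^4 / (16*(a*k)^2)"
      by (simp add: power_divide power_mult_distrib flip: power_mult)
  qed simp_all
  also have "\<dots> = (\<integral>\<omega>. (Y1 \<omega> - Y2 \<omega>)^4 \<partial>M) / (16*(a*k)^2)" by simp
  also have "\<dots> \<le> 16*m4_Y1 / (16*(a*k)^2)"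
    using integral_diff_power4_le akpos by (intro divide_right_mono) auto
  finally show ?thesis by simp
qed

lemma var_Ynext_approx:
  "\<bar>(\<integral>\<omega>. (Ynext \<omega> - (\<integral>\<omega>. Ynext \<omega> \<partial>M))^2 \<partial>M) - sig - var_Y1/2\<bar> \<le> (m4_Y1 + var_Y1)/(a*k) + m4_Y1/(a*k)^2"
proof -
  have "0 \<le> (\<integral>\<omega>. (defect \<omega> - (\<integral>\<omega>. defect \<omega> \<partial>M))^2 \<partial>M)" by (intro integral_nonneg_AE) auto
  moreover have "2 * ((m4_Y1 + var_Y1)/(2*(a*k))) = (m4_Y1 + var_Y1)/(a*k)" using ab k1 by (simp add: field_simps)
  ultimately show ?thesis
    using var_Ynext_eq abs_integral_mean_dev_mult_defect_le integral_defect_centered_power2_le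
    unfolding abs_le_iff by linarith
qed

lemma var_Y1_le: "var_Y1 \<le> (b*k)^4 * var_inv_Y1"
proof -
  have B: "0 < b*k" using ab k1 by simp
  have "var_Y1 \<le> (\<integral>\<omega>. (Y1 \<omega> - 1/mean_inv_Y1)^2 \<partial>M)" unfolding var_Y1_def mean_Y1_def by (rule variance_le) simp
  also have "\<dots> \<le> (\<integral>\<omega>. (b*k)^4 * (1/Y1 \<omega> - mean_inv_Y1)^2 \<partial>M)"
  proof (rule integral_mono_bounded)
    fix \<omega> assume w: "\<omega> \<in> space M"
    have "\<bar>Y1 \<omega> - 1/mean_inv_Y1\<bar> \<le> (b*k)^2 * \<bar>1/Y1 \<omega> - mean_inv_Y1\<bar>"
      using abs_diff_inverse_le[of "Y1 \<omega>" "b*k" mean_inv_Y1] Y1pos[OF w] Y1_bounds[OF w] mean_inv_Y1_bounds B by auto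
    then have "\<bar>Y1 \<omega> - 1/mean_inv_Y1\<bar>^2 \<le> ((b*k)^2 * \<bar>1/Y1 \<omega> - mean_inv_Y1\<bar>)^2" by (intro power_mono) auto
    then show "(Y1 \<omega> - 1/mean_inv_Y1)^2 \<le> (b*k)^4 * (1/Y1 \<omega> - mean_inv_Y1)^2" by (simp add: power_mult_distrib flip: power_mult)
  qed simp_all
  also have "\<dots> = (b*k)^4 * var_inv_Y1" by (simp add: var_inv_Y1_def)
  finally show ?thesis .
qed

lemma m4_Y1_le: "m4_Y1 \<le> 16 * (b*k)^8 * m4_inv_Y1"
proof -
  have B: "0 < b*k" using ab k1 by simp
  define r where "r = 1/mean_inv_Y1"
  have "m4_Y1 \<le> (\<integral>\<omega>. 8*((Y1 \<omega> - r)^4 + (mean_Y1 - r)^4) \<partial>M)"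
    unfolding m4_Y1_def
  proof (rule integral_mono_bounded)
    fix \<omega>
    have e: "(Y1 \<omega> - r) - (mean_Y1 - r) = Y1 \<omega> - mean_Y1" by simp
    show "(Y1 \<omega> - mean_Y1)^4 \<le> 8*((Y1 \<omega> - r)^4 + (mean_Y1 - r)^4)" using power4_diff_le[of "Y1 \<omega> - r" "mean_Y1 - r", unfolded e] .
  qed simp_all
  also have "\<dots> = 8 * (\<integral>\<omega>. (Y1 \<omega> - r)^4 \<partial>M) + 8 * (mean_Y1 - r)^4" by (simp add: prob_space)
  also have "(mean_Y1 - r)^4 \<le> (\<integral>\<omega>. (Y1 \<omega> - r)^4 \<partial>M)"
  proof -
    have m: "mean_Y1 - r = (\<integral>\<omega>. Y1 \<omega> - r \<partial>M)" by (simp add: mean_Y1_def prob_space)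
    have "(mean_Y1 - r)^2 \<le> (\<integral>\<omega>. (Y1 \<omega> - r)^2 \<partial>M)" unfolding m by (rule power2_integral_le) simp
    then have "((mean_Y1 - r)^2)^2 \<le> (\<integral>\<omega>. (Y1 \<omega> - r)^2 \<partial>M)^2" by (intro power_mono) auto
    also have "\<dots> \<le> (\<integral>\<omega>. ((Y1 \<omega> - r)^2)^2 \<partial>M)" by (rule power2_integral_le) simp
    finally show ?thesis by (simp flip: power_mult)
  qed
  also have "8 * (\<integral>\<omega>. (Y1 \<omega> - r)^4 \<partial>M) + 8 * (\<integral>\<omega>. (Y1 \<omega> - r)^4 \<partial>M) \<le> 16 * (\<integral>\<omega>. (b*k)^8 * (1/Y1 \<omega> - mean_inv_Y1)^4 \<partial>M)"
  proof -
    have "(\<integral>\<omega>. (Y1 \<omega> - r)^4 \<partial>M) \<le> (\<integral>\<omega>. (b*k)^8 * (1/Y1 \<omega> - mean_inv_Y1)^4 \<partial>M)"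
    proof (rule integral_mono_bounded)
      fix \<omega> assume w: "\<omega> \<in> space M"
      have "\<bar>Y1 \<omega> - 1/mean_inv_Y1\<bar> \<le> (b*k)^2 * \<bar>1/Y1 \<omega> - mean_inv_Y1\<bar>"
        using abs_diff_inverse_le[of "Y1 \<omega>" "b*k" mean_inv_Y1] Y1pos[OF w] Y1_bounds[OF w] mean_inv_Y1_bounds B by auto
      then have "\<bar>Y1 \<omega> - 1/mean_inv_Y1\<bar>^4 \<le> ((b*k)^2 * \<bar>1/Y1 \<omega> - mean_inv_Y1\<bar>)^4" by (intro power_mono) auto
      then show "(Y1 \<omega> - r)^4 \<le> (b*k)^8 * (1/Y1 \<omega> - mean_inv_Y1)^4" by (simp add: r_def power_mult_distrib flip: power_mult)
    qed simp_all
    then show ?thesis by simp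
  qed
  also have "\<dots> = 16 * (b*k)^8 * m4_inv_Y1" by (simp add: m4_inv_Y1_def)
  finally show ?thesis by simp
qed

lemma mean_inv_Y1_minus_inverse_mean: "0 \<le> mean_inv_Y1 - 1/mean_Y1 \<and> mean_inv_Y1 - 1/mean_Y1 \<le> var_Y1/(a*k)^3"
proof -
  have m: "a*k \<le> mean_Y1" using mean_Y1_bounds by simp
  have mp: "0 < mean_Y1" using m akpos by simp
  have pt: "1/Y1 \<omega> = 1/mean_Y1 - (Y1 \<omega> - mean_Y1)/mean_Y1^2 + (Y1 \<omega> - mean_Y1)^2/(mean_Y1^2 * Y1 \<omega>)" if w: "\<omega> \<in> space M" for \<omega>
    using Y1pos[OF w] mp by (simp add: field_simps power2_eq_square)
  have "mean_inv_Y1 = (\<integral>\<omega>. 1/mean_Y1 - (Y1 \<omega> - mean_Y1)/mean_Y1^2 + (Y1 \<omega> - mean_Y1)^2/(mean_Y1^2 * Y1 \<omega>) \<partial>M)"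
    unfolding mean_inv_Y1_def by (rule Bochner_Integration.integral_cong) (simp_all add: pt)
  also have "\<dots> = 1/mean_Y1 - (\<integral>\<omega>. Y1 \<omega> - mean_Y1 \<partial>M)/mean_Y1^2 + (\<integral>\<omega>. (Y1 \<omega> - mean_Y1)^2/mean_Y1^2 / Y1 \<omega> \<partial>M)"
    by (simp add: prob_space)
  finally have e: "mean_inv_Y1 - 1/mean_Y1 = (\<integral>\<omega>. (Y1 \<omega> - mean_Y1)^2/mean_Y1^2 / Y1 \<omega> \<partial>M)" using integral_Y1_centered by simp
  have lo: "0 \<le> (\<integral>\<omega>. (Y1 \<omega> - mean_Y1)^2/mean_Y1^2 / Y1 \<omega> \<partial>M)"
    by (intro integral_nonneg_AE AE_I2) (auto dest: Y1pos)
  have "(\<integral>\<omega>. (Y1 \<omega> - mean_Y1)^2/mean_Y1^2 / Y1 \<omega> \<partial>M) \<le> (\<integral>\<omega>. (Y1 \<omega> - mean_Y1)^2/(a*k)^3 \<partial>M)"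
  proof (rule integral_mono_bounded)
    fix \<omega> assume w: "\<omega> \<in> space M"
    have y: "a*k \<le> Y1 \<omega>" using Y1_bounds[OF w] by simp
    have "(a*k)^3 \<le> mean_Y1^2 * Y1 \<omega>"
    proof -
      have "(a*k)^2 * (a*k) \<le> mean_Y1^2 * Y1 \<omega>" using m y akpos by (intro mult_mono power_mono) auto
      then show ?thesis by (simp add: power2_eq_square power3_eq_cube)
    qed
    then have "(Y1 \<omega> - mean_Y1)^2/(mean_Y1^2 * Y1 \<omega>) \<le> (Y1 \<omega> - mean_Y1)^2/(a*k)^3"
      using akpos Y1pos[OF w] mp by (intro divide_left_mono mult_pos_pos) auto
    then show "(Y1 \<omega> - mean_Y1)^2/mean_Y1^2 / Y1 \<omega> \<le> (Y1 \<omega> - mean_Y1)^2/(a*k)^3" by simp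
  qed simp_all
  also have "\<dots> = var_Y1/(a*k)^3" by (simp add: var_Y1_def)
  finally show ?thesis using e lo by simp
qed

lemma abs_inverse_Y1_centered_le: "\<omega> \<in> space M \<Longrightarrow> \<bar>1/Y1 \<omega> - mean_inv_Y1\<bar> \<le> 1/a"
proof -
  assume w: "\<omega> \<in> space M"
  have "0 \<le> 1/(b*k)" "1/(a*k) \<le> 1/a" using ab k1 by (simp_all add: divide_simps)
  then show ?thesis using inverse_Y1_bounds[OF w] mean_inv_Y1_bounds unfolding abs_le_iff by linarith
qed

lemma var_inv_Y1_le: "var_inv_Y1 \<le> 1/a^2"
proof -
  have "var_inv_Y1 \<le> (\<integral>\<omega>. (1/a)^2 \<partial>M)" unfolding var_inv_Y1_def
  proof (rule integral_mono_bounded)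
    fix \<omega> assume "\<omega> \<in> space M"
    then have "\<bar>1/Y1 \<omega> - mean_inv_Y1\<bar>^2 \<le> (1/a)^2"
      using abs_inverse_Y1_centered_le by (intro power_mono) auto
    then show "(1/Y1 \<omega> - mean_inv_Y1)^2 \<le> (1/a)^2" by simp
  qed simp_all
  then show ?thesis by (simp add: prob_space power_divide)
qed

lemma m4_inv_Y1_le: "m4_inv_Y1 \<le> 1/a^4"
proof -
  have "m4_inv_Y1 \<le> (\<integral>\<omega>. (1/a)^4 \<partial>M)" unfolding m4_inv_Y1_def
  proof (rule integral_mono_bounded)
    fix \<omega> assume "\<omega> \<in> space M"
    then have "\<bar>1/Y1 \<omega> - mean_inv_Y1\<bar>^4 \<le> (1/a)^4"
      using abs_inverse_Y1_centered_le by (intro power_mono) auto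
    then show "(1/Y1 \<omega> - mean_inv_Y1)^4 \<le> (1/a)^4" by (simp add: power_even_abs_numeral)
  qed simp_all
  then show ?thesis by (simp add: prob_space power_divide)
qed

end

section \<open>Recurrences and asymptotic estimates\<close>

lemma inverse_pow_three_halves_le: "1 \<le> (n::real) \<Longrightarrow> 1/(n * sqrt n) \<le> 6*(1/sqrt n - 1/sqrt (1+n))"
proof -
  assume n: "1 \<le> n"
  define s where "s = sqrt n"
  define t where "t = sqrt (1+n)"
  have s2: "s^2 = n" using n by (simp add: s_def)
  have t2: "t^2 = n+1" using n by (simp add: t_def add.commute)
  have s1: "1 \<le> s" using n by (simp add: s_def)
  have st: "s < t" using n by (simp add: s_def t_def)
  have tp: "0 < t" using st s1 by simp
  have "t*(t+s) \<le> 6* s^2*(t - s)*(t+s)"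
  proof -
    have "(t - s)*(t+s) = 1" using s2 t2 by (simp add: algebra_simps power2_eq_square)
    then have r: "6* s^2*(t - s)*(t+s) = 6* s^2" by (simp add: mult.assoc)
    have "t*(t+s) \<le> t*(t+t)" using st tp by (intro mult_left_mono) auto
    also have "\<dots> = 2*(n+1)" using t2 by (simp add: power2_eq_square)
    also have "\<dots> \<le> 6* s^2" using s2 n by simp
    finally have "t*(t+s) \<le> 6* s^2" .
    then show ?thesis using r by linarith
  qed
  then have "t \<le> 6* s^2*(t-s)" using st s1 by (simp add: mult_le_cancel_right_pos add_pos_pos)
  then have "1/(s^2* s) \<le> 6*(t-s)/(s*t)"
    using s1 tp st by (simp add: divide_simps power2_eq_square) (simp add: algebra_simps)
  moreover have "6*(t-s)/(s*t) = 6*(1/s - 1/t)" using s1 tp by (simp add: field_simps)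
  ultimately show ?thesis using s2 by (simp add: s_def t_def)
qed

lemma abs_le_of_increments:
  fixes d :: "nat \<Rightarrow> real"
  assumes "\<And>k. 1 \<le> k \<Longrightarrow> \<bar>d (Suc k) - d k\<bar> \<le> E/(real k * sqrt (real k))" "d 1 = 0" "0 \<le> E"
  shows "1 \<le> n \<Longrightarrow> \<bar>d n\<bar> \<le> E*(6 - 6/sqrt (real n))"
proof (induction n rule: nat_induct_at_least)
  case base then show ?case using assms by simp
next
  case (Suc n)
  have "\<bar>d (Suc n)\<bar> \<le> \<bar>d n\<bar> + E/(real n * sqrt (real n))" using assms(1)[OF Suc.hyps] by linarith
  also have "\<dots> \<le> E*(6 - 6/sqrt (real n)) + E*(6*(1/sqrt n - 1/sqrt (1+real n)))"
  proof -
    have "E*(1/(real n * sqrt (real n))) \<le> E*(6*(1/sqrt n - 1/sqrt (1+real n)))"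
      using mult_left_mono[OF inverse_pow_three_halves_le[of "real n"] assms(3)] Suc.hyps by simp
    then show ?thesis using Suc.IH by (simp add: ac_simps)
  qed
  also have "\<dots> = E*(6 - 6/sqrt (real (Suc n)))" by (simp add: algebra_simps add.commute)
  finally show ?case .
qed

lemma inverse_le_sqrt_diff: "1 \<le> (n::real) \<Longrightarrow> 1/n \<le> 4*(sqrt (n+1) - sqrt n)"
proof -
  assume n: "1 \<le> n"
  have q: "(sqrt (n+1) - sqrt n)*(sqrt (n+1) + sqrt n) = 1"
    using n by (simp add: algebra_simps)
  have "sqrt (n+1) + sqrt n \<le> 4*n"
    using sqrt_le_self[of n] sqrt_le_self[of "n+1"] n by linarith
  then have "(sqrt (n+1) - sqrt n)*(sqrt (n+1) + sqrt n) \<le> (sqrt (n+1) - sqrt n)*(4*n)"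
    by (intro mult_left_mono) auto
  then have "1 \<le> 4*n*(sqrt (n+1) - sqrt n)" using q by (simp add: mult_ac)
  then show ?thesis using n by (simp add: divide_simps mult_ac)
qed

lemma le_sqrt_of_increments:
  fixes s :: "nat \<Rightarrow> real"
  assumes "\<And>k. 1 \<le> k \<Longrightarrow> s (Suc k) \<le> s k + C/real k" "s 1 \<le> 0" "0 \<le> C"
  shows "1 \<le> n \<Longrightarrow> s n \<le> 4*C * sqrt (real n)"
proof (induction n rule: nat_induct_at_least)
  case base then show ?case using assms by simp
next
  case (Suc n)
  have "C * (1/real n) \<le> C * (4*(sqrt (n+1) - sqrt n))"
    using inverse_le_sqrt_diff[of "real n"] Suc.hyps assms(3) by (intro mult_left_mono) (auto simp: add.commute)
  then show ?case using assms(1)[OF Suc.hyps] Suc.IH by (simp add: algebra_simps add.commute)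
qed

lemma linear_recurrence_bound_explicit:
  fixes u :: "nat \<Rightarrow> real" and lam C D K th :: real and p k0 :: nat
  assumes "0 \<le> lam" "0 \<le> C" "0 \<le> D" "0 \<le> K" "1 \<le> k0"
    and growth: "\<And>k. k0 \<le> k \<Longrightarrow> (1 + 1/real k)^p \<le> th"
    and K: "D * real k0 ^ p \<le> K" "(lam*K + C) * th \<le> K"
    and rec: "\<And>k. 1 \<le> k \<Longrightarrow> u (Suc k) \<le> lam * u k + C / real k ^ p"
    and bound: "\<And>k. 1 \<le> k \<Longrightarrow> u k \<le> D"
  shows "1 \<le> n \<Longrightarrow> u n \<le> K / real n ^ p"
proof (induction n rule: nat_induct_at_least)
  case base
  have "D \<le> D * real k0 ^ p" using assms(3,5) by (simp add: mult_le_cancel_left1)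
  then show ?case using bound[of 1] K(1) by simp
next
  case (Suc k)
  show ?case
  proof (cases "Suc k \<le> k0")
    case True
    have "D * real (Suc k) ^ p \<le> D * real k0 ^ p" using True assms(3) by (intro mult_left_mono power_mono) auto
    then have "D \<le> K / real (Suc k) ^ p" using K(1) by (simp add: divide_simps mult_ac del: of_nat_Suc)
    then show ?thesis using bound[of "Suc k"] by simp
  next
    case False
    have kp: "0 < real k" using Suc.hyps by simp
    have "u (Suc k) \<le> lam * (K / real k ^ p) + C / real k ^ p"
      using rec[OF Suc.hyps] Suc.IH assms(1) by (meson add_right_mono mult_left_mono order_trans)
    also have "\<dots> = (lam*K + C) * ((1 + 1/real k)^p / real (Suc k) ^ p)"
      using kp by (simp add: field_simps power_divide)
    also have "\<dots> \<le> (lam*K + C) * (th / real (Suc k) ^ p)"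
      using growth[of k] False assms(1,2,4) by (intro mult_left_mono divide_right_mono) auto
    also have "\<dots> \<le> K / real (Suc k) ^ p"
      using K(2) by (simp add: divide_right_mono)
    finally show ?thesis .
  qed
qed

lemma linear_recurrence_bound:
  fixes lam C D :: real and p :: nat
  assumes "0 \<le> lam" "lam < 1" "0 \<le> C" "0 \<le> D"
  shows "\<exists>K. \<forall>u::nat \<Rightarrow> real. (\<forall>k\<ge>1. u (Suc k) \<le> lam * u k + C / real k ^ p) \<longrightarrow>
      (\<forall>k\<ge>1. u k \<le> D) \<longrightarrow> (\<forall>k\<ge>1. u k \<le> K / real k ^ p)"
proof -
  define th where "th = 2/(1+lam)"
  have th1: "1 < th" and lt: "lam * th < 1" using assms by (simp_all add: th_def field_simps)
  have "(\<lambda>k. (1 + 1/real k)^p) \<longlonglongrightarrow> (1 + 0)^p"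
    by (intro tendsto_intros lim_inverse_n')
  then have "eventually (\<lambda>k. (1 + 1/real k)^p < th) sequentially"
    using th1 by (intro order_tendstoD) auto
  then obtain N where N: "\<And>k. N \<le> k \<Longrightarrow> (1 + 1/real k)^p < th" by (auto simp: eventually_sequentially)
  define k0 where "k0 = max N 1"
  define K where "K = max (D * real k0 ^ p) (C*th/(1 - lam*th))"
  have "C*th/(1-lam*th) \<le> K" by (simp add: K_def)
  then have "(lam*K + C) * th \<le> K" using lt by (simp add: pos_divide_le_eq algebra_simps)
  moreover have "0 \<le> K" "D * real k0 ^ p \<le> K" using assms by (auto simp: K_def le_max_iff_disj)
  moreover have "(1 + 1/real k)^p \<le> th" if "k0 \<le> k" for k using N[of k] that by (simp add: k0_def)
  moreover have "1 \<le> k0" by (simp add: k0_def)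
  ultimately show ?thesis
    using linear_recurrence_bound_explicit[of lam C D K k0 p th] assms by (intro exI[of _ K]) auto
qed

lemma harm_0: "harm 0 = (0::real)" by (simp add: harm_def)

lemma abs_harm_minus_ln_le: "1 \<le> n \<Longrightarrow> \<bar>harm (n - 1) - ln (real n)\<bar> \<le> (1::real)"
proof -
  assume n: "1 \<le> n"
  have lo: "ln (real n) \<le> harm (n - 1)"
    using ln_le_harm[of "n - 1"] n by (simp add: of_nat_diff)
  have up: "harm (n - 1) \<le> 1 + ln (real n)"
  proof (cases "n = 1")
    case True then show ?thesis by (simp add: harm_def)
  next
    case False
    then obtain j where j: "n - 1 = Suc j" using n by (cases "n - 1") auto
    have "harm (Suc j) - ln (real (Suc j)) \<le> harm (Suc 0) - ln (real (Suc 0))"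
      using decseq_harm_diff_ln[unfolded decseq_def, rule_format, of 0 j] by simp
    then have "harm (n - 1) \<le> 1 + ln (real (n - 1))" using j by (simp add: harm_Suc harm_0)
    moreover have "ln (real (n - 1)) \<le> ln (real n)" using j by simp
    ultimately show ?thesis by simp
  qed
  show ?thesis using lo up by simp
qed

text \<open>Chosen uniformly over all sequences, so that the final constants depend on \<open>a\<close> and \<open>b\<close> only.\<close>

definition recurrence_bound :: "real \<Rightarrow> real \<Rightarrow> real \<Rightarrow> nat \<Rightarrow> real" where
  "recurrence_bound lam C D p = (SOME K. \<forall>u::nat \<Rightarrow> real. (\<forall>k\<ge>1. u (Suc k) \<le> lam * u k + C / real k ^ p) \<longrightarrow>
      (\<forall>k\<ge>1. u k \<le> D) \<longrightarrow> (\<forall>k\<ge>1. u k \<le> K / real k ^ p))"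

lemma recurrence_bound_le:
  assumes "0 \<le> lam" "lam < 1" "0 \<le> C" "0 \<le> D"
    and "\<And>k. 1 \<le> k \<Longrightarrow> u (Suc k) \<le> lam * u k + C / real k ^ p" "\<And>k. 1 \<le> k \<Longrightarrow> u k \<le> D" "1 \<le> k"
  shows "u k \<le> recurrence_bound lam C D p / real k ^ p"
proof -
  have "\<forall>u::nat \<Rightarrow> real. (\<forall>k\<ge>1. u (Suc k) \<le> lam * u k + C / real k ^ p) \<longrightarrow>
      (\<forall>k\<ge>1. u k \<le> D) \<longrightarrow> (\<forall>k\<ge>1. u k \<le> recurrence_bound lam C D p / real k ^ p)"
    unfolding recurrence_bound_def by (rule someI_ex[OF linear_recurrence_bound[OF assms(1-4)]])
  then show ?thesis using assms(5-7) by blast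
qed

lemma inverse_second_order_identity:
  fixes m q s :: real
  assumes "m \<noteq> 0" "q \<noteq> 0"
  shows "1/m - 1/q - s/q^2 = s*(s - (m - q + s))/(m*q^2) - (m - q + s)/(m*q)"
  using assms by (simp add: field_simps power2_eq_square)

lemma conductance_bound_from_mean:
  fixes n m mu sig c L M1 B2 a b :: real
  assumes n: "1 \<le> n" and mu: "a \<le> mu" "mu \<le> b" and a: "0 < a" and sg: "0 \<le> sig" "sig \<le> (b-a)^2"
    and m: "a*n \<le> m" and th: "\<bar>m - mu*n + sig/mu*L\<bar> \<le> M1"
    and L: "0 \<le> L" "L \<le> n" "L^2 \<le> 4*n"
    and c: "0 \<le> c - 1/m" "c - 1/m \<le> B2/(a^3*n^2)"
  shows "\<bar>c - 1/(mu*n) - sig*L/(mu^3*n^2)\<bar> \<le> (B2/a^3 + (4*((b-a)^2/a)^2 + (b-a)^2/a*M1)/a^3 + M1/a^2) / n^2"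
proof -
  define S where "S = sig/mu"
  define th where "th = m - mu*n + S*L"
  have mup: "0 < mu" using mu a by simp
  have np: "0 < n" using n by simp
  have mp: "0 < m" using m a np by (smt (verit) mult_pos_pos)
  have S0: "0 \<le> S" using sg mup by (simp add: S_def)
  have S1: "S \<le> (b-a)^2/a" unfolding S_def using sg mu a mup
    by (meson divide_left_mono dual_order.trans mult_pos_pos order.refl zero_le_power2 frac_le)
  have thb: "\<bar>th\<bar> \<le> M1" using th by (simp add: th_def S_def)
  have M1: "0 \<le> M1" using thb by simp
  have key: "1/m - 1/(mu*n) - S*L/(mu^2*n^2) = S*L*(S*L - th)/(m*mu^2*n^2) - th/(m*mu*n)"
    using inverse_second_order_identity[of m "mu*n" "S*L"] mp mup np by (simp add: th_def power_mult_distrib)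
  have e2: "sig*L/(mu^3*n^2) = S*L/(mu^2*n^2)" using mup by (simp add: S_def field_simps power2_eq_square power3_eq_cube)
  have quadratic_term: "\<bar>S*L*(S*L - th)/(m*mu^2*n^2)\<bar> \<le> (4*((b-a)^2/a)^2 + (b-a)^2/a*M1)/(a^3*n^2)"
  proof -
    have num1: "\<bar>S*L*(S*L - th)\<bar> \<le> S*L*(S*L + M1)"
    proof -
      have LS: "0 \<le> S*L" using S0 L by simp
      have t1: "th \<le> M1" "- th \<le> M1" using thb by auto
      have "\<bar>S*L - th\<bar> \<le> S*L + M1" unfolding abs_le_iff using LS t1 by (intro conjI) linarith+
      then have "S*L*\<bar>S*L - th\<bar> \<le> S*L*(S*L + M1)" using LS by (intro mult_left_mono) auto
      then show ?thesis using LS S0 L by (simp add: abs_mult)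
    qed
    have num2: "S*L*(S*L + M1) \<le> (4*((b-a)^2/a)^2 + (b-a)^2/a*M1) * n"
    proof -
      have "S*L*(S*L + M1) = S^2*L^2 + S*L*M1" by (simp add: algebra_simps power2_eq_square)
      also have "\<dots> \<le> ((b-a)^2/a)^2*(4*n) + (b-a)^2/a*n*M1"
        using S0 S1 L M1 a np by (intro add_mono mult_mono power_mono) auto
      finally show ?thesis by (simp add: algebra_simps)
    qed
    have num: "\<bar>S*L*(S*L - th)\<bar> \<le> (4*((b-a)^2/a)^2 + (b-a)^2/a*M1) * n" using num1 num2 by linarith
    have den: "a^3*n^3 \<le> m*mu^2*n^2"
    proof -
      have "(a*n)*(a^2*n^2) \<le> m*(mu^2*n^2)" using m mu a np mp by (intro mult_mono) (auto intro!: power_mono)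
      then show ?thesis by (simp add: algebra_simps power2_eq_square power3_eq_cube)
    qed
    have "\<bar>S*L*(S*L - th)/(m*mu^2*n^2)\<bar> = \<bar>S*L*(S*L - th)\<bar>/(m*mu^2*n^2)" using mp mup np by (simp add: abs_divide)
    also have "\<dots> \<le> (4*((b-a)^2/a)^2 + (b-a)^2/a*M1) * n/(a^3*n^3)"
      using num den a np by (intro frac_le) auto
    also have "\<dots> = (4*((b-a)^2/a)^2 + (b-a)^2/a*M1)/(a^3*n^2)" using np by (simp add: power2_eq_square power3_eq_cube)
    finally show ?thesis .
  qed
  have linear_term: "\<bar>th/(m*mu*n)\<bar> \<le> M1/(a^2*n^2)"
  proof -
    have den: "a^2*n^2 \<le> m*mu*n"
    proof -
      have "(a*n)*(a*n) \<le> m*(mu*n)" using m mu a np mp by (intro mult_mono) auto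
      then show ?thesis by (simp add: algebra_simps power2_eq_square)
    qed
    have "\<bar>th/(m*mu*n)\<bar> = \<bar>th\<bar>/(m*mu*n)" using mp mup np by (simp add: abs_divide)
    also have "\<dots> \<le> M1/(a^2*n^2)" using thb den a np by (intro frac_le) auto
    finally show ?thesis .
  qed
  have eq: "c - 1/(mu*n) - sig*L/(mu^3*n^2) = (c - 1/m) + (S*L*(S*L - th)/(m*mu^2*n^2) - th/(m*mu*n))"
    unfolding e2 key[symmetric] by simp
  have "\<bar>c - 1/(mu*n) - sig*L/(mu^3*n^2)\<bar> \<le> \<bar>c - 1/m\<bar> + (\<bar>S*L*(S*L - th)/(m*mu^2*n^2)\<bar> + \<bar>th/(m*mu*n)\<bar>)"
    unfolding eq by (rule order_trans[OF abs_triangle_ineq add_left_mono[OF abs_triangle_ineq4]])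
  also have "\<dots> \<le> B2/(a^3*n^2) + ((4*((b-a)^2/a)^2 + (b-a)^2/a*M1)/(a^3*n^2) + M1/(a^2*n^2))"
    using c quadratic_term linear_term by (intro add_mono) auto
  also have "\<dots> = (B2/a^3 + (4*((b-a)^2/a)^2 + (b-a)^2/a*M1)/a^3 + M1/a^2) / n^2"
    by (simp add: add_divide_distrib divide_divide_eq_left)
  finally show ?thesis .
qed

lemma mean_increment_error:
  fixes dl v m sg mu s k a b B2 B4 K5 Cs :: real
  assumes k: "1 \<le> k" and a: "0 < a" and m: "a*k \<le> m" and mu: "a \<le> mu"
    and sg: "0 \<le> sg" "sg \<le> (b-a)^2"
    and e1: "\<bar>dl - v/(2*m)\<bar> \<le> (B4+B2)/(2*(a*k)^2)"
    and e2: "\<bar>v - 2 * sg\<bar> \<le> K5/k"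
    and s: "0 \<le> s" "s \<le> 4*Cs * sqrt k" and ms: "m = mu*k - s"
    and nn: "0 \<le> B4 + B2" "0 \<le> K5" "0 \<le> Cs"
  shows "\<bar>dl - sg/mu/k\<bar> \<le> ((B4+B2)/(2*a^2) + K5/(2*a) + 4*(b-a)^2*Cs/a^2) / (k * sqrt k)"
proof -
  have kp: "0 < k" using k by simp
  have mp: "0 < m" using m a kp by (smt (verit) mult_pos_pos)
  have mup: "0 < mu" using mu a by simp
  have sk: "sqrt k \<le> k" using k by (rule sqrt_le_self)
  have skp: "0 < sqrt k" using kp by simp
  have split: "dl - sg/mu/k = (dl - v/(2*m)) + (v - 2 * sg)/(2*m) + sg * s/(m*mu*k)"
  proof -
    have s_eq: "s = mu*k - m" using ms by simp
    show ?thesis unfolding s_eq using mp mup kp by (simp add: field_simps)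
  qed
  have t1: "\<bar>dl - v/(2*m)\<bar> \<le> (B4+B2)/(2*a^2) / (k * sqrt k)"
  proof -
    have "(B4+B2)/(2*(a*k)^2) = (B4+B2)/(2*a^2) / (k*k)" by (simp add: power2_eq_square mult_ac)
    also have "\<dots> \<le> (B4+B2)/(2*a^2) / (k * sqrt k)"
    proof (rule divide_left_mono)
      show "k * sqrt k \<le> k * k" using sk kp by (intro mult_left_mono) auto
      show "0 \<le> (B4+B2)/(2*a^2)" using nn by simp
      show "0 < k * k * (k * sqrt k)" using kp skp by simp
    qed
    finally show ?thesis using e1 by simp
  qed
  have t2: "\<bar>(v - 2 * sg)/(2*m)\<bar> \<le> K5/(2*a) / (k * sqrt k)"
  proof -
    have K5: "0 \<le> K5" using nn by simp
    have "\<bar>(v - 2 * sg)/(2*m)\<bar> = \<bar>v - 2 * sg\<bar>/(2*m)" using mp by (simp add: abs_divide)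
    also have "\<dots> \<le> (K5/k)/(2*(a*k))" using e2 m mp a kp K5 by (intro frac_le) auto
    also have "\<dots> = K5/(2*a) / (k*k)" by (simp add: mult_ac)
    also have "\<dots> \<le> K5/(2*a) / (k * sqrt k)" using sk kp skp K5 a
      by (intro divide_left_mono mult_left_mono mult_pos_pos) auto
    finally show ?thesis .
  qed
  have t3: "\<bar>sg * s/(m*mu*k)\<bar> \<le> 4*(b-a)^2*Cs/a^2 / (k * sqrt k)"
  proof -
    have Cs: "0 \<le> Cs" using nn by simp
    have "\<bar>sg * s/(m*mu*k)\<bar> = sg * s/(m*mu*k)" using sg s mp mup kp by simp
    also have "\<dots> \<le> ((b-a)^2*(4*Cs * sqrt k))/((a*k)*a*k)"
      using sg s m mu mp mup kp a Cs by (intro frac_le mult_mono mult_pos_pos) auto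
    also have "\<dots> = 4*(b-a)^2*Cs/a^2 / (k * sqrt k)"
    proof -
      define r where "r = sqrt k"
      have kr: "k = r*r" using kp by (simp add: r_def)
      have rp: "0 < r" using skp by (simp add: r_def)
      show ?thesis unfolding r_def[symmetric] kr using rp a by (simp add: field_simps power2_eq_square)
    qed
    finally show ?thesis .
  qed
  have "\<bar>dl - sg/mu/k\<bar> \<le> \<bar>dl - v/(2*m)\<bar> + \<bar>(v - 2 * sg)/(2*m)\<bar> + \<bar>sg * s/(m*mu*k)\<bar>"
    unfolding split by (rule order_trans[OF abs_triangle_ineq add_right_mono[OF abs_triangle_ineq]])
  also have "\<dots> \<le> (B4+B2)/(2*a^2) / (k * sqrt k) + K5/(2*a) / (k * sqrt k) + 4*(b-a)^2*Cs/a^2 / (k * sqrt k)"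
    using t1 t2 t3 by (intro add_mono)
  finally show ?thesis by (simp add: add_divide_distrib)
qed

section \<open>The random tree\<close>

definition "var_C_const a b = recurrence_bound (3/4) (3*(b-a)^2/a^4) (1/a^2) 4"
definition "m4_C_const a b =
  recurrence_bound (1/3) ((var_C_const a b)^2 + 65*b^4*(var_C_const a b)^4 + 729*(b-a)^4/a^8) (1/a^4) 8"
definition "var_R_const a b = b^4 * var_C_const a b"
definition "m4_R_const a b = 16*b^8 * m4_C_const a b"
definition "var_limit_const a b =
  recurrence_bound (1/2) ((m4_R_const a b + var_R_const a b)/a + m4_R_const a b/a^2) (var_R_const a b + 2*(b-a)^2) 1"
definition "deficit_const a b = var_R_const a b / (2*a)"
definition "increment_const a b = (m4_R_const a b + var_R_const a b)/(2*a^2) + var_limit_const a b/(2*a)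
  + 4*(b-a)^2*deficit_const a b/a^2"
definition "mean_const a b = 6 * increment_const a b + (b-a)^2/a"
definition "conductance_const a b = var_R_const a b/a^3
  + (4*((b-a)^2/a)^2 + (b-a)^2/a*mean_const a b)/a^3 + mean_const a b/a^2"

locale iid_tree = prob_space +
  fixes X :: "bool list \<Rightarrow> 'a \<Rightarrow> real" and a b :: real
  assumes indep: "indep_vars (\<lambda>_. borel) X UNIV"
    and identically_distributed: "\<And>w. distr M borel (X w) = distr M borel (X [])"
    and X_bounds: "\<And>w \<omega>. \<omega> \<in> space M \<Longrightarrow> a \<le> X w \<omega> \<and> X w \<omega> \<le> b"
    and ab: "0 < a" "a < b"
begin

lemma X_measurable[measurable]: "X u \<in> borel_measurable M"
  using indep unfolding indep_vars_def by auto

lemma subres_measurable[measurable]: "subres X k w \<in> borel_measurable M"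
  by (rule borel_measurable_subres) simp

lemma integral_subres_eq:
  "(f :: real \<Rightarrow> real) \<in> borel_measurable borel \<Longrightarrow>
    (\<integral>\<omega>. f (subres X k w \<omega>) \<partial>M) = (\<integral>\<omega>. f (subres X k [] \<omega>) \<partial>M)"
  using integral_distr[OF subres_measurable[of k w], of f] integral_distr[OF subres_measurable[of k "[]"], of f]
    distr_subres_eq[OF indep identically_distributed, of k w "[]"] by simp

lemma recursion_step_subres:
  assumes "1 \<le> k"
  shows "recursion_step M (X []) (subres X k [False]) (subres X k [True]) a b k"
proof unfold_locales
  fix \<phi> :: "real \<times> real \<Rightarrow> real" assume "\<phi> \<in> borel_measurable (borel \<Otimes>\<^sub>M borel)"
  then show "indep_var borel (X []) borel (\<lambda>\<omega>. \<phi> (subres X k [False] \<omega>, subres X k [True] \<omega>))"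
    using indep_var_edge_children[OF indep, of \<phi> "[]" k] by simp
next
  show "indep_var borel (subres X k [False]) borel (subres X k [True])"
    using indep_var_children[OF indep, of k "[]"] by simp
next
  show "distr M borel (subres X k [False]) = distr M borel (subres X k [True])"
    by (rule distr_subres_eq[OF indep identically_distributed])
next
  fix \<omega> assume "\<omega> \<in> space M"
  then have "\<And>u. a \<le> X u \<omega> \<and> X u \<omega> \<le> b" using X_bounds by blast
  then show "a * real k \<le> subres X k [False] \<omega> \<and> subres X k [False] \<omega> \<le> b * real k"
    and "a * real k \<le> subres X k [True] \<omega> \<and> subres X k [True] \<omega> \<le> b * real k"
    using subres_bounds[where a=a and X=X and \<omega>=\<omega> and b=b and k=k] ab by auto
qed (use ab X_bounds assms in auto)

definition "mean_R k = (\<integral>\<omega>. subres X k [] \<omega> \<partial>M)"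
definition "var_R k = (\<integral>\<omega>. (subres X k [] \<omega> - mean_R k)^2 \<partial>M)"
definition "m4_R k = (\<integral>\<omega>. (subres X k [] \<omega> - mean_R k)^4 \<partial>M)"
definition "mean_C k = (\<integral>\<omega>. 1 / subres X k [] \<omega> \<partial>M)"
definition "var_C k = (\<integral>\<omega>. (1 / subres X k [] \<omega> - mean_C k)^2 \<partial>M)"
definition "m4_C k = (\<integral>\<omega>. (1 / subres X k [] \<omega> - mean_C k)^4 \<partial>M)"
definition "mu = (\<integral>\<omega>. X [] \<omega> \<partial>M)"
definition "sig = (\<integral>\<omega>. (X [] \<omega> - mu)^2 \<partial>M)"
definition "mean_drop k = mean_R k + mu - mean_R (Suc k)"

context
  fixes k :: nat
  assumes k: "1 \<le> k"
begin

interpretation step: recursion_step M "X []" "subres X k [False]" "subres X k [True]" a b k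
  using k by (rule recursion_step_subres)

lemma step_Ynext: "step.Ynext = subres X (Suc k) []"
  by (auto simp: fun_eq_iff step.Ynext_def subres_Suc)

lemma step_moments:
  "step.mean_inv_Y1 = mean_C k" "step.var_inv_Y1 = var_C k" "step.m4_inv_Y1 = m4_C k"
  "step.mean_Y1 = mean_R k" "step.var_Y1 = var_R k" "step.m4_Y1 = m4_R k"
  "step.mu = mu" "step.sig = sig"
proof -
  show mean_C: "step.mean_inv_Y1 = mean_C k"
    unfolding step.mean_inv_Y1_def mean_C_def by (rule integral_subres_eq) measurable
  show "step.var_inv_Y1 = var_C k"
    unfolding step.var_inv_Y1_def var_C_def mean_C by (rule integral_subres_eq) measurable
  show "step.m4_inv_Y1 = m4_C k"
    unfolding step.m4_inv_Y1_def m4_C_def mean_C by (rule integral_subres_eq) measurable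
  show mean_R: "step.mean_Y1 = mean_R k"
    unfolding step.mean_Y1_def mean_R_def by (rule integral_subres_eq) measurable
  show "step.var_Y1 = var_R k"
    unfolding step.var_Y1_def var_R_def mean_R by (rule integral_subres_eq) measurable
  show "step.m4_Y1 = m4_R k"
    unfolding step.m4_Y1_def m4_R_def mean_R by (rule integral_subres_eq) measurable
  show mu: "step.mu = mu" by (simp add: step.mu_def mu_def)
  show "step.sig = sig" by (simp add: step.sig_def sig_def mu flip: step.mu_def)
qed

lemma var_C_Suc_le: "var_C (Suc k) \<le> 3/4 * var_C k + 3 * ((b - a) / (a * k)^2)^2"
  using step.var_inverse_step
  by (simp add: step_moments step_Ynext var_C_def[of "Suc k"] mean_C_def step.cond_err_def)

lemma m4_C_Suc_le:
  "m4_C (Suc k) \<le> m4_C k / 3 + (var_C k)^2 + 65*b^4*(var_C k)^4 + 729*((b - a) / (a * k)^2)^4"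
  using step.m4_inverse_step
  by (simp add: step_moments step_Ynext m4_C_def[of "Suc k"] mean_C_def step.cond_err_def)

lemma var_R_le_var_C: "var_R k \<le> (b*k)^4 * var_C k"
  using step.var_Y1_le by (simp add: step_moments)

lemma m4_R_le_m4_C: "m4_R k \<le> 16*(b*k)^8 * m4_C k"
  using step.m4_Y1_le by (simp add: step_moments)

lemma mean_drop_bounds:
  "0 \<le> mean_drop k" "mean_drop k \<le> var_R k / (2*(a*k))"
  "\<bar>mean_drop k - var_R k / (2 * mean_R k)\<bar> \<le> (m4_R k + var_R k)/(2*(a*k)^2)"
proof -
  have "mean_drop k = (\<integral>\<omega>. step.defect \<omega> \<partial>M)"
    using step.integral_Ynext
    by (simp add: mean_drop_def mean_R_def[of "Suc k"] step_moments step_Ynext)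
  then show "0 \<le> mean_drop k" "mean_drop k \<le> var_R k / (2*(a*k))"
    "\<bar>mean_drop k - var_R k / (2 * mean_R k)\<bar> \<le> (m4_R k + var_R k)/(2*(a*k)^2)"
    using step.integral_defect_bounds step.integral_defect_approx by (simp_all add: step_moments)
qed

lemma var_R_Suc_approx:
  "\<bar>var_R (Suc k) - sig - var_R k / 2\<bar> \<le> (m4_R k + var_R k)/(a*k) + m4_R k/(a*k)^2"
  using step.var_Ynext_approx
  by (simp add: step_moments step_Ynext var_R_def[of "Suc k"] mean_R_def[of "Suc k"])

lemma mean_C_minus_inverse_mean_R: "0 \<le> mean_C k - 1 / mean_R k \<and> mean_C k - 1 / mean_R k \<le> var_R k / (a*k)^3"
  using step.mean_inv_Y1_minus_inverse_mean by (simp add: step_moments)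

lemma mean_R_bounds: "a*k \<le> mean_R k \<and> mean_R k \<le> b*k"
  using step.mean_Y1_bounds by (simp add: step_moments)

lemma var_C_le: "var_C k \<le> 1/a^2"
  using step.var_inv_Y1_le by (simp add: step_moments)

lemma m4_C_le: "m4_C k \<le> 1/a^4"
  using step.m4_inv_Y1_le by (simp add: step_moments)

lemma moments_nonneg: "0 \<le> var_C k" "0 \<le> m4_C k" "0 \<le> var_R k" "0 \<le> m4_R k"
  using step.var_inv_Y1_nonneg step.m4_inv_Y1_nonneg step.var_Y1_nonneg step.m4_Y1_nonneg
  by (simp_all add: step_moments)

end

lemma mu_sig_bounds: "a \<le> mu" "mu \<le> b" "0 \<le> sig" "sig \<le> (b-a)^2"
proof -
  interpret step: recursion_step M "X []" "subres X 1 [False]" "subres X 1 [True]" a b 1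
    by (rule recursion_step_subres) simp
  have "step.mu = mu" "step.sig = sig" by (simp_all add: step.mu_def step.sig_def mu_def sig_def)
  then show "a \<le> mu" "mu \<le> b" "0 \<le> sig" "sig \<le> (b-a)^2"
    using step.mu_bounds step.sig_bounds by simp_all
qed

lemma mean_R_1: "mean_R 1 = mu"
  by (simp add: mean_R_def mu_def subres_Suc)

lemma var_C_le_const: "1 \<le> k \<Longrightarrow> var_C k \<le> var_C_const a b / real k ^ 4"
  unfolding var_C_const_def
proof (rule recurrence_bound_le[where u=var_C])
  fix k :: nat assume k: "1 \<le> k"
  have "3 * ((b - a) / (a * k)^2)^2 = 3*(b-a)^2/a^4 / real k ^ 4"
    by (simp add: power_divide power_mult_distrib flip: power_mult)
  then show "var_C (Suc k) \<le> 3/4 * var_C k + 3*(b-a)^2/a^4 / real k ^ 4"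
    using var_C_Suc_le[OF k] by simp
qed (use var_C_le ab in auto)

lemma m4_C_le_const: "1 \<le> k \<Longrightarrow> m4_C k \<le> m4_C_const a b / real k ^ 8"
  unfolding m4_C_const_def
proof (rule recurrence_bound_le[where u=m4_C])
  fix k :: nat assume k: "1 \<le> k"
  let ?K = "var_C_const a b"
  have v0: "0 \<le> var_C k" and v1: "var_C k \<le> ?K / real k ^ 4"
    using moments_nonneg(1)[OF k] var_C_le_const[OF k] .
  have "(var_C k)^2 \<le> (?K / real k ^ 4)^2" using v0 v1 by (intro power_mono) auto
  then have q2: "(var_C k)^2 \<le> ?K^2 / real k ^ 8" by (simp add: power_divide flip: power_mult)
  have "(var_C k)^4 \<le> (?K / real k ^ 4)^4" using v0 v1 by (intro power_mono) auto
  also have "\<dots> = ?K^4 / real k ^ 16" by (simp add: power_divide flip: power_mult)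
  also have "\<dots> \<le> ?K^4 / real k ^ 8" using k by (intro divide_left_mono power_increasing) auto
  finally have q4: "(var_C k)^4 \<le> ?K^4 / real k ^ 8" .
  have e4: "729*((b - a) / (a * k)^2)^4 = 729*(b-a)^4/a^8 / real k ^ 8"
    by (simp add: power_divide power_mult_distrib flip: power_mult)
  have "m4_C (Suc k) \<le> m4_C k / 3 + (var_C k)^2 + 65*b^4*(var_C k)^4 + 729*((b - a) / (a * k)^2)^4"
    using m4_C_Suc_le[OF k] .
  also have "\<dots> \<le> m4_C k / 3 + ?K^2 / real k ^ 8 + 65*b^4*(?K^4 / real k ^ 8) + 729*(b-a)^4/a^8 / real k ^ 8"
    unfolding e4 using q2 q4 by (intro add_mono mult_left_mono) auto
  finally show "m4_C (Suc k) \<le> 1/3 * m4_C k + (?K^2 + 65*b^4*?K^4 + 729*(b-a)^4/a^8) / real k ^ 8"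
    by (simp add: add_divide_distrib)
qed (use m4_C_le ab in auto)

lemma var_R_le_const: "1 \<le> k \<Longrightarrow> var_R k \<le> var_R_const a b"
proof -
  assume k: "1 \<le> k"
  have "var_R k \<le> (b*k)^4 * var_C k" using var_R_le_var_C[OF k] .
  also have "\<dots> \<le> (b*k)^4 * (var_C_const a b / real k ^ 4)"
    using var_C_le_const[OF k] by (intro mult_left_mono) auto
  also have "\<dots> = var_R_const a b" using k by (simp add: var_R_const_def power_mult_distrib)
  finally show ?thesis .
qed

lemma m4_R_le_const: "1 \<le> k \<Longrightarrow> m4_R k \<le> m4_R_const a b"
proof -
  assume k: "1 \<le> k"
  have "m4_R k \<le> 16*(b*k)^8 * m4_C k" using m4_R_le_m4_C[OF k] .
  also have "\<dots> \<le> 16*(b*k)^8 * (m4_C_const a b / real k ^ 8)"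
    using m4_C_le_const[OF k] by (intro mult_left_mono) auto
  also have "\<dots> = m4_R_const a b" using k by (simp add: m4_R_const_def power_mult_distrib)
  finally show ?thesis .
qed

lemma R_consts_nonneg: "0 \<le> var_R_const a b" "0 \<le> m4_R_const a b"
  using var_R_le_const[of 1] m4_R_le_const[of 1] moments_nonneg(3,4)[of 1] by simp_all

lemma abs_var_R_minus_twice_sig_le: "1 \<le> k \<Longrightarrow> \<bar>var_R k - 2 * sig\<bar> \<le> var_limit_const a b / real k ^ 1"
  unfolding var_limit_const_def
proof (rule recurrence_bound_le[where u="\<lambda>k. \<bar>var_R k - 2 * sig\<bar>"])
  fix k :: nat assume k: "1 \<le> k"
  let ?C = "(m4_R_const a b + var_R_const a b)/a + m4_R_const a b/a^2"
  have "(m4_R k + var_R k)/(a*k) + m4_R k/(a*k)^2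
      \<le> (m4_R_const a b + var_R_const a b)/(a*k) + m4_R_const a b/(a*k)^2"
    using m4_R_le_const[OF k] var_R_le_const[OF k] moments_nonneg(4)[OF k] ab k
    by (intro add_mono divide_right_mono) auto
  also have "\<dots> \<le> (m4_R_const a b + var_R_const a b)/(a*k) + m4_R_const a b/(a^2*k)"
  proof -
    have "a^2 * k \<le> (a*k)^2" using ab k by (simp add: power2_eq_square mult_left_mono)
    then show ?thesis using R_consts_nonneg ab k by (intro add_left_mono divide_left_mono) auto
  qed
  also have "\<dots> = ?C / real k ^ 1" by (simp add: add_divide_distrib)
  finally have "(m4_R k + var_R k)/(a*k) + m4_R k/(a*k)^2 \<le> ?C / real k ^ 1" .
  moreover have "var_R k / 2 - sig = (var_R k - 2 * sig) / 2" by simp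
  then have "\<bar>var_R k / 2 - sig\<bar> = 1/2 * \<bar>var_R k - 2 * sig\<bar>" by (simp only: abs_divide abs_numeral)
  ultimately show "\<bar>var_R (Suc k) - 2 * sig\<bar> \<le> 1/2 * \<bar>var_R k - 2 * sig\<bar> + ?C / real k ^ 1"
    using var_R_Suc_approx[OF k] by linarith
next
  fix k :: nat assume k: "1 \<le> k"
  then show "\<bar>var_R k - 2 * sig\<bar> \<le> var_R_const a b + 2*(b-a)^2"
    using var_R_le_const[OF k] moments_nonneg(3)[OF k] mu_sig_bounds unfolding abs_le_iff by linarith
qed (use ab R_consts_nonneg in auto)

lemma var_limit_const_nonneg: "0 \<le> var_limit_const a b"
  using abs_var_R_minus_twice_sig_le[of 1] by simp

lemma mean_drop_le_const: "1 \<le> k \<Longrightarrow> mean_drop k \<le> deficit_const a b / real k"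
proof -
  assume k: "1 \<le> k"
  have "mean_drop k \<le> var_R k / (2*(a*k))" using mean_drop_bounds(2)[OF k] .
  also have "\<dots> \<le> var_R_const a b / (2*(a*k))" using var_R_le_const[OF k] ab k by (intro divide_right_mono) auto
  finally show ?thesis by (simp add: deficit_const_def)
qed

definition "deficit k = mu * real k - mean_R k"

lemma deficit_1: "deficit 1 = 0"
  unfolding deficit_def mean_R_1 by simp

lemma deficit_Suc: "deficit (Suc k) = deficit k + mean_drop k"
  by (simp add: deficit_def mean_drop_def algebra_simps)

lemma deficit_bounds:
  assumes "1 \<le> k" shows "0 \<le> deficit k" "deficit k \<le> 4 * deficit_const a b * sqrt (real k)"
proof -
  show "0 \<le> deficit k" using assms
  proof (induction k rule: nat_induct_at_least)
    case (Suc k) then show ?case using deficit_Suc[of k] mean_drop_bounds(1)[of k] by simp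
  qed (use deficit_1 in simp)
  have C: "0 \<le> deficit_const a b" using R_consts_nonneg ab by (simp add: deficit_const_def)
  show "deficit k \<le> 4 * deficit_const a b * sqrt (real k)"
    using le_sqrt_of_increments[where s=deficit, OF _ _ C assms] deficit_Suc mean_drop_le_const deficit_1
    by simp
qed

lemma abs_mean_drop_minus_le:
  assumes k: "1 \<le> k"
  shows "\<bar>mean_drop k - sig / mu / real k\<bar> \<le> increment_const a b / (real k * sqrt (real k))"
  unfolding increment_const_def
proof (rule mean_increment_error[where v="var_R k" and m="mean_R k" and s="deficit k"])
  have "\<bar>mean_drop k - var_R k / (2 * mean_R k)\<bar> \<le> (m4_R k + var_R k)/(2*(a*k)^2)"
    by (rule mean_drop_bounds(3)[OF k])
  also have "\<dots> \<le> (m4_R_const a b + var_R_const a b)/(2*(a*k)^2)"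
    using var_R_le_const[OF k] m4_R_le_const[OF k] ab k by (intro divide_right_mono add_mono) auto
  finally show "\<bar>mean_drop k - var_R k / (2 * mean_R k)\<bar> \<le> (m4_R_const a b + var_R_const a b)/(2*(a*real k)^2)" .
  show "\<bar>var_R k - 2 * sig\<bar> \<le> var_limit_const a b / real k"
    using abs_var_R_minus_twice_sig_le[OF k] by simp
qed (use k ab mean_R_bounds mu_sig_bounds deficit_bounds R_consts_nonneg var_limit_const_nonneg
     in \<open>auto simp: deficit_def deficit_const_def\<close>)

lemma mean_R_asymptotic:
  assumes n: "1 \<le> n"
  shows "\<bar>mean_R n - mu * real n + sig / mu * ln (real n)\<bar> \<le> mean_const a b"
proof -
  define d where "d k = deficit k - sig / mu * harm (k - 1)" for k
  have d_step: "\<bar>d (Suc k) - d k\<bar> \<le> increment_const a b / (real k * sqrt (real k))" if "1 \<le> k" for k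
  proof -
    have "harm k = harm (k - 1) + 1 / real k"
      using that by (cases k) (auto simp: harm_Suc inverse_eq_divide)
    then have "d (Suc k) - d k = mean_drop k - sig / mu / real k"
      by (simp add: d_def deficit_Suc algebra_simps)
    then show ?thesis using abs_mean_drop_minus_le[OF that] by simp
  qed
  have E: "0 \<le> increment_const a b"
    using R_consts_nonneg var_limit_const_nonneg ab by (simp add: increment_const_def deficit_const_def)
  have d_1: "d 1 = 0" unfolding d_def using deficit_1 by (simp add: harm_0)
  have "\<bar>d n\<bar> \<le> increment_const a b * (6 - 6 / sqrt (real n))"
    using abs_le_of_increments[OF d_step d_1 E n] .
  also have "\<dots> \<le> increment_const a b * 6" using E by (intro mult_left_mono) auto
  finally have dn: "\<bar>d n\<bar> \<le> 6 * increment_const a b" by simp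
  have sm: "0 \<le> sig / mu" "sig / mu \<le> (b-a)^2/a"
    using mu_sig_bounds ab by (auto intro!: frac_le)
  have harm: "\<bar>sig / mu * (harm (n - 1) - ln (real n))\<bar> \<le> (b-a)^2/a * 1"
    unfolding abs_mult using sm abs_harm_minus_ln_le[OF n] by (intro mult_mono) auto
  have "mean_R n - mu * real n + sig / mu * ln (real n) = - d n - sig / mu * (harm (n - 1) - ln (real n))"
    by (simp add: d_def deficit_def algebra_simps)
  also have "\<bar>\<dots>\<bar> \<le> \<bar>- d n\<bar> + \<bar>sig / mu * (harm (n - 1) - ln (real n))\<bar>"
    by (rule abs_triangle_ineq4)
  finally show ?thesis using dn harm by (simp add: mean_const_def)
qed

lemma mean_C_asymptotic:
  assumes n: "1 \<le> n"
  shows "\<bar>mean_C n - 1 / (mu * real n) - sig * ln (real n) / (mu ^ 3 * (real n)\<^sup>2)\<bar> \<le> conductance_const a b / (real n)\<^sup>2"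
proof -
  have n1: "1 \<le> real n" using n by simp
  have ln_bounds: "0 \<le> ln (real n)" "ln (real n) \<le> real n" "(ln (real n))^2 \<le> 4 * real n"
    using ln_le_self[of "real n"] power2_ln_le[OF n1] n1 by auto
  have "mean_C n - 1 / mean_R n \<le> var_R n / (a * real n)^3" using mean_C_minus_inverse_mean_R[OF n] by simp
  also have "\<dots> \<le> var_R_const a b / (a * real n)^3" using var_R_le_const[OF n] ab n1 by (intro divide_right_mono) auto
  also have "\<dots> \<le> var_R_const a b / (a^3 * (real n)\<^sup>2)"
  proof (rule divide_left_mono)
    have "(real n)^2 * 1 \<le> (real n)^2 * real n" using n1 by (intro mult_left_mono) auto
    then show "a^3 * (real n)^2 \<le> (a * real n)^3" using ab by (simp add: power_mult_distrib power3_eq_cube power2_eq_square)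
  qed (use R_consts_nonneg ab n1 in auto)
  finally have "mean_C n - 1 / mean_R n \<le> var_R_const a b / (a^3 * (real n)\<^sup>2)" .
  then show ?thesis
    unfolding conductance_const_def
    by (intro conductance_bound_from_mean[OF n1 _ _ _ _ _ _ mean_R_asymptotic[OF n] ln_bounds])
       (use mu_sig_bounds ab mean_R_bounds[OF n] mean_C_minus_inverse_mean_R[OF n] in auto)
qed

end

theorem theorem5:
  fixes a b :: real
  assumes "0 < a" and "a < b"
  shows "\<exists>M1 M2 :: real. \<forall>(M :: 'a measure) (X :: bool list \<Rightarrow> 'a \<Rightarrow> real).
    (prob_space M \<and> prob_space.indep_vars M (\<lambda>_. borel) X UNIV
     \<and> (\<forall>w. distr M borel (X w) = distr M borel (X []))
     \<and> (\<forall>w. \<forall>\<omega>\<in>space M. a \<le> X w \<omega> \<and> X w \<omega> \<le> b))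
    \<longrightarrow> (\<forall>n::nat. n \<ge> 2 \<longrightarrow>
      (let \<mu> = integral\<^sup>L M (X []);
           \<sigma>2 = integral\<^sup>L M (\<lambda>\<omega>. (X [] \<omega> - \<mu>)\<^sup>2)
       in \<bar>integral\<^sup>L M (Rn X n) - \<mu> * real n + \<sigma>2 / \<mu> * ln (real n)\<bar> \<le> M1
        \<and> \<bar>integral\<^sup>L M (Cn X n) - 1 / (\<mu> * real n)
             - \<sigma>2 * ln (real n) / (\<mu> ^ 3 * (real n)\<^sup>2)\<bar> \<le> M2 / (real n)\<^sup>2))"
proof (intro exI allI impI)
  fix M :: "'a measure" and X :: "bool list \<Rightarrow> 'a \<Rightarrow> real" and n :: nat
  assume hyps: "prob_space M \<and> prob_space.indep_vars M (\<lambda>_. borel) X UNIV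
     \<and> (\<forall>w. distr M borel (X w) = distr M borel (X []))
     \<and> (\<forall>w. \<forall>\<omega>\<in>space M. a \<le> X w \<omega> \<and> X w \<omega> \<le> b)"
    and n: "2 \<le> n"
  then interpret prob_space M by blast
  interpret tree: iid_tree M X a b
    by unfold_locales (use hyps assms in auto)
  have "integral\<^sup>L M (Rn X n) = tree.mean_R n" "integral\<^sup>L M (Cn X n) = tree.mean_C n"
    by (simp_all add: tree.mean_R_def tree.mean_C_def Cn_def[abs_def] Rn_eq_subres[abs_def])
  then show "let \<mu> = integral\<^sup>L M (X []); \<sigma>2 = integral\<^sup>L M (\<lambda>\<omega>. (X [] \<omega> - \<mu>)\<^sup>2)
    in \<bar>integral\<^sup>L M (Rn X n) - \<mu> * real n + \<sigma>2 / \<mu> * ln (real n)\<bar> \<le> mean_const a b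
     \<and> \<bar>integral\<^sup>L M (Cn X n) - 1 / (\<mu> * real n)
          - \<sigma>2 * ln (real n) / (\<mu> ^ 3 * (real n)\<^sup>2)\<bar> \<le> conductance_const a b / (real n)\<^sup>2"
    using tree.mean_R_asymptotic tree.mean_C_asymptotic n
    by (simp add: Let_def tree.mu_def[symmetric] tree.sig_def[symmetric])
qed

end
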